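(* In the setting below, let $q_1,q_2,q_3>0$ with $q_2=q_3$, let $\psi_1,\psi_2,\psi_3>0$, $\eta_1,\eta_2,\eta_3>0$, and $\sigma\in\mathcal{K}$. All inequalities below are required to hold along every solution at every time $t\ge0$ (with $\boldsymbol{u}=\boldsymbol{u}(t,\cdot)$, $\boldsymbol{d}=\boldsymbol{d}(t,\cdot)$), with summation over repeated $j$. (I) If, for solutions with $\boldsymbol{d}\equiv0$, $\sum_{i=1}^3\int_\Omega\big((\frac{q_iC}{Re}-1)u_i^2+q_iU_ju_i\partial_{x_j}u_i+q_iu_ju_i\partial_{x_j}U_i-q_iu_iF_{ij}u_j\big)d\Omega\ge0,$ then every solution with $\boldsymbol{d}\equiv0$ satisfies $\|\boldsymbol{u}\|_{\mathcal{L}^2_{[0,\infty),\Omega}}\le\gamma\|\boldsymbol{u}(0,\cdot)\|_{\mathcal{L}^2_\Omega}$ with $\gamma^2=\max_i q_i$. (II) If $\sum_{i=1}^3\int_\Omega\big((\frac{q_iC}{Re}-1)u_i^2+q_iU_ju_i\partial_{x_j}u_i+q_iu_ju_i\partial_{x_j}U_i-q_iu_iF_{ij}u_j-q_iu_id_i+\eta_i^2d_i^2\big)d\Omega\ge0,$ then every solution with $\boldsymbol{u}(0,\cdot)\equiv0$ satisfies $\|\boldsymbol{u}\|^2_{\mathcal{L}^2_{[0,\infty),\Omega}}\le\sum_{i=1}^3\eta_i^2\|d_i\|^2_{\mathcal{L}^2_{[0,\infty),\Omega}}$. (III) If $\sum_{i=1}^3\int_\Omega\big((\frac{q_iC}{Re}-\psi_iq_i)u_i^2+q_iU_ju_i\partial_{x_j}u_i+q_iu_ju_i\partial_{x_j}U_i-q_iu_iF_{ij}u_j-q_iu_id_i\big)d\Omega+\int_\Omega\sigma(|\boldsymbol{d}|)d\Omega\ge0,$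 then there exist $\psi>0$ and $\beta,\tilde\beta,\chi\in\mathcal{K}_\infty$ such that every solution satisfies, for all $t>0$, $\|\boldsymbol{u}(t,\cdot)\|_{\mathcal{L}^2_\Omega}\le\beta\big(e^{-\psi t}\chi(\|\boldsymbol{u}(0,\cdot)\|_{\mathcal{L}^2_\Omega})\big)+\tilde\beta\big(\sup_{\tau\in[0,t)}\int_\Omega\sigma(|\boldsymbol{d}(\tau,\mathrm{x})|)d\Omega\big)$.
   Context: Setting (channel flows). Fix $Re>0$ and a constant matrix $F=(F_{ij})\in\mathbb{R}^{3\times3}$. Coordinates $x=(x_1,x_2,x_3)$ (streamwise, wall-normal, spanwise). All perturbation fields are independent of $x_1$ and defined on a cross-section $\Omega\subset\mathbb{R}^2$ in the variables $\mathrm{x}=(x_2,x_3)$, where either (a) $\Omega$ is a bounded Lipschitz domain and $\boldsymbol{u}=0$ on $\partial\Omega$, or (b) $\Omega=(a,b)\times(0,L)$ with $\boldsymbol{u}=0$ at $x_2\in\{a,b\}$ and all fields $L$-periodic in $x_3$. The base flow is a smooth steady divergence-free field $\boldsymbol{U}=(U_1,U_2,U_3)$ depending only on $(x_2,x_3)$, with pressure $P$, satisfying $0=\frac1{Re}\nabla^2\boldsymbol{U}-\boldsymbol{U}\cdot\nabla\boldsymbol{U}-\nabla P+F\boldsymbol{U}$. A solution is a sufficiently smooth global triple: perturbation velocity $\boldsymbol{u}=(u_1,u_2,u_3):[0,\infty)\times\Omega\to\mathbb{R}^3$, perturbation pressure $p$, forcing $\boldsymbol{d}=(d_1,d_2,d_3):[0,\infty)\times\Omega\to\mathbb{R}^3$,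 all independent of $x_1$, satisfying the boundary conditions and $$\partial_t u_i=\tfrac1{Re}\nabla^2u_i-u_j\partial_{x_j}u_i-U_j\partial_{x_j}u_i-u_j\partial_{x_j}U_i-\partial_{x_i}p+F_{ij}u_j+d_i\ (i=1,2,3),\qquad \partial_{x_j}u_j=0,$$ with summation over repeated $j\in\{1,2,3\}$ and $\partial_{x_1}\equiv0$ on perturbation quantities. $C>0$ denotes a constant for which the Poincaré inequality $\int_\Omega|\nabla w|^2d\Omega\ge C\int_\Omega w^2d\Omega$ holds for every smooth $w:\Omega\to\mathbb{R}$ satisfying the boundary conditions above. Norms: $\|v\|_{\mathcal{L}^2_\Omega}=(\int_\Omega|v|^2d\Omega)^{1/2}$, $\|v\|_{\mathcal{L}^2_{[0,\infty),\Omega}}=(\int_0^\infty\int_\Omega|v|^2d\Omega\,dt)^{1/2}$, $|\cdot|$ Euclidean norm. $\mathcal{K}$: continuous strictly increasing $f:[0,\infty)\to[0,\infty)$ with $f(0)=0$; $\mathcal{K}_\infty$: functions in $\mathcal{K}$ that are unbounded. *)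

theory Defs
  imports "HOL-Analysis.Analysis"
begin

text \<open>
  Cross-section points are pairs x = (x2, x3) :: real \<times> real.
  Vector fields are indexed by natural numbers; only the components 1, 2, 3 are used.
  A perturbation field has type nat \<Rightarrow> real \<Rightarrow> real \<times> real \<Rightarrow> real (component, time, point);
  a steady base-flow field has type nat \<Rightarrow> real \<times> real \<Rightarrow> real.
  Independence of x1 is built into the representation; derivatives in x1 are zero.
\<close>

fun iterD :: "'a::real_normed_vector list \<Rightarrow> ('a \<Rightarrow> real) \<Rightarrow> 'a \<Rightarrow> real" where
  "iterD [] g = g"
| "iterD (v # vs) g = (\<lambda>p. frechet_derivative (iterD vs g) (at p) v)"

definition smooth_on :: "'a::real_normed_vector set \<Rightarrow> ('a \<Rightarrow> real) \<Rightarrow> bool" where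
  "smooth_on S g \<longleftrightarrow>
     (\<exists>T. open T \<and> S \<subseteq> T \<and> (\<forall>vs. \<forall>p\<in>T. iterD vs g differentiable (at p)))"

definition dt :: "(real \<Rightarrow> real \<times> real \<Rightarrow> real) \<Rightarrow> real \<Rightarrow> real \<times> real \<Rightarrow> real" where
  "dt f t x = frechet_derivative (\<lambda>(s, y). f s y) (at (t, x)) (1, (0, 0))"

definition sdx :: "nat \<Rightarrow> (real \<times> real \<Rightarrow> real) \<Rightarrow> real \<times> real \<Rightarrow> real" where
  "sdx j w x =
     (if j = 2 then frechet_derivative w (at x) (1, 0)
      else if j = 3 then frechet_derivative w (at x) (0, 1)
      else 0)"

definition slap :: "(real \<times> real \<Rightarrow> real) \<Rightarrow> real \<times> real \<Rightarrow> real" where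
  "slap w x = sdx 2 (sdx 2 w) x + sdx 3 (sdx 3 w) x"

definition dx :: "nat \<Rightarrow> (real \<Rightarrow> real \<times> real \<Rightarrow> real) \<Rightarrow> real \<Rightarrow> real \<times> real \<Rightarrow> real" where
  "dx j f t x = sdx j (f t) x"

definition lap :: "(real \<Rightarrow> real \<times> real \<Rightarrow> real) \<Rightarrow> real \<Rightarrow> real \<times> real \<Rightarrow> real" where
  "lap f t x = slap (f t) x"

definition rot :: "real \<Rightarrow> real \<times> real \<Rightarrow> real \<times> real" where
  "rot \<theta> y = (cos \<theta> * fst y - sin \<theta> * snd y, sin \<theta> * fst y + cos \<theta> * snd y)"

definition lipschitz_domain :: "(real \<times> real) set \<Rightarrow> bool" where
  "lipschitz_domain \<Omega> \<longleftrightarrow>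
     open \<Omega> \<and> connected \<Omega> \<and> \<Omega> \<noteq> {} \<and> bounded \<Omega> \<and>
     (\<forall>p\<in>frontier \<Omega>. \<exists>\<theta> r h L \<gamma>.
        0 < r \<and> 0 < h \<and> L-lipschitz_on UNIV \<gamma> \<and> \<gamma> 0 = 0 \<and>
        (\<forall>s. \<bar>s\<bar> < r \<longrightarrow> \<bar>\<gamma> s\<bar> < h) \<and>
        (\<forall>y1 y2. \<bar>y1\<bar> < r \<and> \<bar>y2\<bar> < h \<longrightarrow>
           (p + rot \<theta> (y1, y2) \<in> \<Omega> \<longleftrightarrow> y2 < \<gamma> y1)))"

text \<open>The two admissible geometries: (a) a bounded Lipschitz domain with no-slip boundary,
  (b) a periodic channel (a, b) \<times> (0, L), no-slip at x2 = a, b and L-periodic in x3.\<close>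

datatype geometry = Bounded "(real \<times> real) set" | Periodic real real real

fun valid_geometry :: "geometry \<Rightarrow> bool" where
  "valid_geometry (Bounded \<Omega>) = lipschitz_domain \<Omega>"
| "valid_geometry (Periodic a b L) = (a < b \<and> 0 < L)"

fun dom :: "geometry \<Rightarrow> (real \<times> real) set" where
  "dom (Bounded \<Omega>) = \<Omega>"
| "dom (Periodic a b L) = {a<..<b} \<times> {0<..<L}"

fun region :: "geometry \<Rightarrow> (real \<times> real) set" where
  "region (Bounded \<Omega>) = closure \<Omega>"
| "region (Periodic a b L) = {a..b} \<times> UNIV"

fun periodic_field :: "geometry \<Rightarrow> (real \<times> real \<Rightarrow> real) \<Rightarrow> bool" where
  "periodic_field (Bounded \<Omega>) w = True"
| "periodic_field (Periodic a b L) w = (\<forall>y z. w (y, z + L) = w (y, z))"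

fun bc :: "geometry \<Rightarrow> (real \<times> real \<Rightarrow> real) \<Rightarrow> bool" where
  "bc (Bounded \<Omega>) w = (\<forall>x\<in>frontier \<Omega>. w x = 0)"
| "bc (Periodic a b L) w =
     ((\<forall>z. w (a, z) = 0 \<and> w (b, z) = 0) \<and> (\<forall>y z. w (y, z + L) = w (y, z)))"

text \<open>The pressure may carry a constant streamwise gradient G (P = G x1 + Pt(x2,x3)), which is the
  general form of a steady pressure for an x1-independent velocity.\<close>

definition base_flow ::
  "geometry \<Rightarrow> real \<Rightarrow> (nat \<Rightarrow> nat \<Rightarrow> real) \<Rightarrow> (nat \<Rightarrow> real \<times> real \<Rightarrow> real)
    \<Rightarrow> real \<Rightarrow> (real \<times> real \<Rightarrow> real) \<Rightarrow> bool" where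
  "base_flow g Rey F U G Pt \<longleftrightarrow>
     (\<forall>i\<in>{1..3}. smooth_on (region g) (U i)) \<and> smooth_on (region g) Pt \<and>
     (\<forall>x\<in>dom g. (\<Sum>j\<in>{1..3}. sdx j (U j) x) = 0) \<and>
     (\<forall>i\<in>{1..3}. \<forall>x\<in>dom g.
        0 = 1 / Rey * slap (U i) x - (\<Sum>j\<in>{1..3}. U j x * sdx j (U i) x)
            - (if i = 1 then G else sdx i Pt x) + (\<Sum>j\<in>{1..3}. F i j * U j x))"

definition solution ::
  "geometry \<Rightarrow> real \<Rightarrow> (nat \<Rightarrow> nat \<Rightarrow> real) \<Rightarrow> (nat \<Rightarrow> real \<times> real \<Rightarrow> real)
    \<Rightarrow> (nat \<Rightarrow> real \<Rightarrow> real \<times> real \<Rightarrow> real) \<Rightarrow> (real \<Rightarrow> real \<times> real \<Rightarrow> real)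
    \<Rightarrow> (nat \<Rightarrow> real \<Rightarrow> real \<times> real \<Rightarrow> real) \<Rightarrow> bool" where
  "solution g Rey F U u p d \<longleftrightarrow>
     (\<forall>i\<in>{1..3}. smooth_on ({0..} \<times> region g) (\<lambda>(t, x). u i t x)) \<and>
     (\<forall>i\<in>{1..3}. smooth_on ({0..} \<times> region g) (\<lambda>(t, x). d i t x)) \<and>
     smooth_on ({0..} \<times> region g) (\<lambda>(t, x). p t x) \<and>
     (\<forall>t\<ge>0. (\<forall>i\<in>{1..3}. bc g (u i t) \<and> periodic_field g (d i t)) \<and> periodic_field g (p t)) \<and>
     (\<forall>t\<ge>0. \<forall>x\<in>dom g. (\<Sum>j\<in>{1..3}. dx j (u j) t x) = 0) \<and>
     (\<forall>i\<in>{1..3}. \<forall>t\<ge>0. \<forall>x\<in>dom g.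
        dt (u i) t x =
          1 / Rey * lap (u i) t x
          - (\<Sum>j\<in>{1..3}. u j t x * dx j (u i) t x)
          - (\<Sum>j\<in>{1..3}. U j x * dx j (u i) t x)
          - (\<Sum>j\<in>{1..3}. u j t x * sdx j (U i) x)
          - dx i p t x
          + (\<Sum>j\<in>{1..3}. F i j * u j t x)
          + d i t x)"

definition L2_sq :: "(real \<times> real) set \<Rightarrow> (nat \<Rightarrow> real \<times> real \<Rightarrow> real) \<Rightarrow> real" where
  "L2_sq \<Omega> v = (LINT x:\<Omega>|lborel. (\<Sum>i\<in>{1..3}. (v i x)\<^sup>2))"

definition L2_norm :: "(real \<times> real) set \<Rightarrow> (nat \<Rightarrow> real \<times> real \<Rightarrow> real) \<Rightarrow> real" where
  "L2_norm \<Omega> v = sqrt (L2_sq \<Omega> v)"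

definition L2st_sq :: "(real \<times> real) set \<Rightarrow> (real \<Rightarrow> real \<times> real \<Rightarrow> real) \<Rightarrow> ennreal" where
  "L2st_sq \<Omega> f = (\<integral>\<^sup>+ t\<in>{0..}. (\<integral>\<^sup>+ x\<in>\<Omega>. ennreal ((f t x)\<^sup>2) \<partial>lborel) \<partial>lborel)"

definition L2st_sq_vec :: "(real \<times> real) set \<Rightarrow> (nat \<Rightarrow> real \<Rightarrow> real \<times> real \<Rightarrow> real) \<Rightarrow> ennreal" where
  "L2st_sq_vec \<Omega> v =
     (\<integral>\<^sup>+ t\<in>{0..}. (\<integral>\<^sup>+ x\<in>\<Omega>. ennreal (\<Sum>i\<in>{1..3}. (v i t x)\<^sup>2) \<partial>lborel) \<partial>lborel)"

definition vnorm :: "(nat \<Rightarrow> real) \<Rightarrow> real" where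
  "vnorm v = sqrt (\<Sum>i\<in>{1..3}. (v i)\<^sup>2)"

definition class_K :: "(real \<Rightarrow> real) \<Rightarrow> bool" where
  "class_K f \<longleftrightarrow> continuous_on {0..} f \<and> strict_mono_on {0..} f \<and> f 0 = 0 \<and>
                  (\<forall>x\<ge>0. f x \<ge> 0)"

definition class_K_inf :: "(real \<Rightarrow> real) \<Rightarrow> bool" where
  "class_K_inf f \<longleftrightarrow> class_K f \<and> \<not> bdd_above (f ` {0..})"

definition poincare_const :: "geometry \<Rightarrow> real \<Rightarrow> bool" where
  "poincare_const g C \<longleftrightarrow>
     (\<forall>w. smooth_on (region g) w \<and> bc g w \<longrightarrow>
        (LINT x:dom g|lborel. (sdx 2 w x)\<^sup>2 + (sdx 3 w x)\<^sup>2) \<ge> C * (LINT x:dom g|lborel. (w x)\<^sup>2))"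

end

theory Submission
  imports Defs
begin

text \<open>Multiplying the \<open>i\<close>-th momentum equation by \<open>q\<^sub>i u\<^sub>i\<close> and integrating over the cross-section,
  the transport, nonlinear and pressure terms are divergences, which integrate to zero under the
  no-slip and periodicity conditions (for the pressure this needs \<open>q\<^sub>2 = q\<^sub>3\<close> and
  \<open>\<partial>\<^sub>2u\<^sub>2 + \<partial>\<^sub>3u\<^sub>3 = 0\<close>), while the viscous term is controlled by the Poincare inequality. Hence
  \<open>V = \<Sum> q\<^sub>i \<parallel>u\<^sub>i\<parallel>\<^sup>2\<close> satisfies \<open>V' \<le> -2 \<Sum>\<^sub>i \<integral> D\<^sub>i\<close>, where \<open>D\<^sub>i\<close> is the common part of the integrands in the
  three hypotheses. Each hypothesis turns this into a dissipation inequality: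
  \<open>V' \<le> -2\<parallel>u\<parallel>\<^sup>2\<close> in (I), \<open>V' \<le> -2\<parallel>u\<parallel>\<^sup>2 + 2 \<Sum> \<eta>\<^sub>i\<^sup>2 \<parallel>d\<^sub>i\<parallel>\<^sup>2\<close> in (II) and
  \<open>V' \<le> -2\<psi> V + 2 \<integral> \<sigma>(|d|)\<close> with \<open>\<psi> = min \<psi>\<^sub>i\<close> in (III). Integrating in time gives (I) and (II);
  Gronwall's inequality gives (III), with \<open>\<beta> r = \<surd>(max q / min q) r\<close>, \<open>\<beta>' r = \<surd>(r / (\<psi> min q))\<close>
  and \<open>\<chi> = id\<close>.\<close>

section \<open>The divergence theorem on the cross-section\<close>

lemma set_integral_Ioo_FTC:
  fixes \<phi> \<phi>' :: "real \<Rightarrow> real"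
  assumes "c \<le> e"
    and "\<And>s. c \<le> s \<Longrightarrow> s \<le> e \<Longrightarrow> (\<phi> has_real_derivative \<phi>' s) (at s)"
    and "continuous_on {c..e} \<phi>'"
  shows "(LINT s:{c<..<e}|lborel. \<phi>' s) = \<phi> e - \<phi> c"
proof -
  have "(LBINT s=ereal c..ereal e. \<phi>' s) = (LINT s:{c<..<e}|lborel. \<phi>' s)"
    using assms(1) by (subst interval_integral_Ioo) auto
  moreover have "(LBINT s=ereal c..ereal e. \<phi>' s) = \<phi> e - \<phi> c"
    by (rule interval_integral_FTC_finite)
       (use assms in \<open>auto simp: has_real_derivative_iff_has_vector_derivative[symmetric]
          intro: has_field_derivative_at_within\<close>)
  ultimately show ?thesis by simp
qed

lemma set_integrable_continuous_closure:
  fixes f :: "'a::euclidean_space \<Rightarrow> real"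
  assumes "open \<Omega>" "bounded \<Omega>" "continuous_on (closure \<Omega>) f"
  shows "set_integrable lborel \<Omega> f"
proof -
  have "set_integrable lborel (closure \<Omega>) f"
    unfolding set_integrable_def
    using borel_integrable_compact[OF _ assms(3)] assms(2) compact_closure by simp
  thus ?thesis by (rule set_integrable_subset) (use assms in \<open>auto simp: closure_subset\<close>)
qed

lemma open_connected_bounded_eq_Ioo:
  fixes C :: "real set"
  assumes "open C" "connected C" "bounded C" "C \<noteq> {}"
  shows "C = {Inf C<..<Sup C}"
proof
  have bdd: "bdd_below C" "bdd_above C"
    using assms bounded_imp_bdd_below bounded_imp_bdd_above by auto
  show "C \<subseteq> {Inf C<..<Sup C}"
  proof
    fix y assume y: "y \<in> C"
    obtain \<epsilon> where \<epsilon>: "\<epsilon> > 0" "ball y \<epsilon> \<subseteq> C" using assms(1) y open_contains_ball by blast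
    have "y - \<epsilon>/2 \<in> C" "y + \<epsilon>/2 \<in> C" using \<epsilon> by (auto simp: dist_real_def subset_eq)
    hence "Inf C \<le> y - \<epsilon>/2" "y + \<epsilon>/2 \<le> Sup C" using bdd by (auto intro: cInf_lower cSup_upper)
    thus "y \<in> {Inf C<..<Sup C}" using \<epsilon> by auto
  qed
  show "{Inf C<..<Sup C} \<subseteq> C"
  proof
    fix y assume y: "y \<in> {Inf C<..<Sup C}"
    obtain a where "a \<in> C" "a < y" using y bdd assms(4) by (auto simp: cInf_less_iff)
    moreover obtain b where "b \<in> C" "y < b" using y bdd assms(4) by (auto simp: less_cSup_iff)
    ultimately show "y \<in> C"
      using assms(2) is_interval_connected_1 mem_is_interval_1_I[of C a b y] by auto
  qed
qed

lemma connected_component_bounded_open_real: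
  fixes S :: "real set"
  assumes S: "open S" "bounded S" and x: "x \<in> S"
  defines "C \<equiv> connected_component_set S x"
  shows "C = {Inf C<..<Sup C}" "Inf C < Sup C" "Inf C \<in> frontier S" "Sup C \<in> frontier S"
proof -
  have C: "open C" "connected C" "C \<subseteq> S" "x \<in> C"
    using S x by (auto simp: C_def open_connected_component connected_component_subset)
  show eq: "C = {Inf C<..<Sup C}"
    using open_connected_bounded_eq_Ioo[of C] C S(2) bounded_subset by blast
  show lt: "Inf C < Sup C" using eq C(4) by (metis greaterThanLessThan_iff less_trans)
  have clC: "closure C = {Inf C..Sup C}" using eq lt by (metis closure_greaterThanLessThan)
  have notin: "z \<notin> S" if z: "z = Inf C \<or> z = Sup C" for z
  proof
    assume "z \<in> S"
    then obtain \<epsilon> where \<epsilon>: "\<epsilon> > 0" "ball z \<epsilon> \<subseteq> S" using S(1) open_contains_ball by blast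
    have "z \<in> closure C" using clC lt z by auto
    then obtain w where "w \<in> C" "dist w z < \<epsilon>" using \<epsilon>(1) closure_approachable by blast
    hence "w \<in> ball z \<epsilon> \<inter> C" by (simp add: dist_commute)
    hence "ball z \<epsilon> \<inter> C \<noteq> {}" by blast
    hence "connected (ball z \<epsilon> \<union> C)" using connected_Un[of "ball z \<epsilon>" C] C(2) by auto
    moreover have "ball z \<epsilon> \<union> C \<subseteq> S" "x \<in> ball z \<epsilon> \<union> C" using \<epsilon>(2) C(3,4) by auto
    ultimately have "ball z \<epsilon> \<union> C \<subseteq> C"
      unfolding C_def by (metis C_def connected_component_maximal)
    hence "z - \<epsilon>/2 \<in> C" "z + \<epsilon>/2 \<in> C" using \<epsilon>(1) by (auto simp: dist_real_def subset_eq)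
    hence "Inf C < z - \<epsilon>/2" "z + \<epsilon>/2 < Sup C" using eq by (metis greaterThanLessThan_iff)+
    thus False using z \<epsilon>(1) by linarith
  qed
  have "closure C \<subseteq> closure S" using C(3) closure_mono by blast
  thus "Inf C \<in> frontier S" "Sup C \<in> frontier S"
    using notin clC lt S(1) by (auto simp: frontier_def interior_open)
qed

text \<open>The components of a bounded open subset of the line, enumerated through the rationals they
  contain (\<open>A n\<close> is the component of the \<open>n\<close>-th rational unless an earlier rational lies in it).\<close>

lemma bounded_open_real_components_enumeration:
  fixes S :: "real set"
  assumes S: "open S" "bounded S"
  obtains A :: "nat \<Rightarrow> real set"
  where "\<And>n. A n \<in> sets lborel" "\<And>m n. m \<noteq> n \<Longrightarrow> A m \<inter> A n = {}" "(\<Union>n. A n) = S"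
    "\<And>n. A n = {} \<or> (\<exists>x\<in>S. A n = connected_component_set S x)"
proof
  define r :: "nat \<Rightarrow> real" where "r n = of_rat (nat_to_rat_surj n)" for n
  have range_r: "range r = \<rat>"
    unfolding r_def Rats_eq_range_of_rat_o_nat_to_rat_surj by auto
  define A where "A n = (if r n \<in> S \<and> (\<forall>m<n. r m \<notin> connected_component_set S (r n))
                          then connected_component_set S (r n) else {})" for n
  show "A n \<in> sets lborel" for n
    using S by (auto simp: A_def open_connected_component)
  show "A n = {} \<or> (\<exists>x\<in>S. A n = connected_component_set S x)" for n
    unfolding A_def by (simp split: if_split) blast
  have disj: "A m \<inter> A n = {}" if "m < n" for m n
  proof (rule ccontr)
    assume "A m \<inter> A n \<noteq> {}"
    then obtain z where z: "z \<in> connected_component_set S (r n)" "z \<in> connected_component_set S (r m)"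
      and least: "\<forall>k<n. r k \<notin> connected_component_set S (r n)" and "r m \<in> S"
      by (auto simp: A_def split: if_splits)
    have "connected_component_set S (r n) = connected_component_set S (r m)"
      using z connected_component_eq by metis
    thus False using least that \<open>r m \<in> S\<close> by auto
  qed
  thus "A m \<inter> A n = {}" if "m \<noteq> n" for m n
    using that by (metis inf_commute linorder_neqE_nat)
  show "(\<Union>n. A n) = S"
  proof
    show "(\<Union>n. A n) \<subseteq> S"
      using connected_component_subset by (fastforce simp: A_def split: if_splits)
    show "S \<subseteq> (\<Union>n. A n)"
    proof
      fix x assume x: "x \<in> S"
      let ?C = "connected_component_set S x"
      obtain q where "q \<in> \<rat>" "q \<in> ?C"
        using connected_component_bounded_open_real(1,2)[OF S x] Rats_dense_in_real
        by (metis greaterThanLessThan_iff)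
      then obtain k where k: "r k \<in> ?C" using range_r by (metis rangeE)
      define n where "n = (LEAST k. r k \<in> ?C)"
      have rn: "r n \<in> ?C" unfolding n_def using k by (rule LeastI)
      have least: "\<forall>m<n. r m \<notin> ?C" unfolding n_def using not_less_Least by blast
      have "connected_component_set S (r n) = ?C" using rn connected_component_eq by blast
      moreover have "r n \<in> S" using rn connected_component_subset by blast
      ultimately have "A n = ?C" using least by (simp add: A_def)
      thus "x \<in> (\<Union>n. A n)" using x by auto
    qed
  qed
qed

lemma divergence_theorem_real:
  fixes S :: "real set" and \<phi> \<phi>' :: "real \<Rightarrow> real"
  assumes S: "open S" "bounded S"
    and deriv: "\<And>s. s \<in> closure S \<Longrightarrow> (\<phi> has_real_derivative \<phi>' s) (at s)"
    and cont: "continuous_on (closure S) \<phi>'"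
    and frontier_zero: "\<And>s. s \<in> frontier S \<Longrightarrow> \<phi> s = 0"
  shows "(LINT s:S|lborel. \<phi>' s) = 0"
proof -
  obtain A :: "nat \<Rightarrow> real set" where meas: "\<And>n. A n \<in> sets lborel" and disjoint: "\<And>m n. m \<noteq> n \<Longrightarrow> A m \<inter> A n = {}"
    and union: "(\<Union>n. A n) = S" and components: "\<And>n. A n = {} \<or> (\<exists>x\<in>S. A n = connected_component_set S x)"
    using bounded_open_real_components_enumeration[OF S] by blast
  have component_zero: "(LINT s:A n|lborel. \<phi>' s) = 0" for n
  proof (cases "A n = {}")
    case False
    then obtain x where x: "x \<in> S" and An: "A n = connected_component_set S x"
      using components by blast
    let ?C = "connected_component_set S x"
    note C = connected_component_bounded_open_real[OF S x]
    have "{Inf ?C..Sup ?C} \<subseteq> closure S"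
      using C(1,2) closure_greaterThanLessThan closure_mono[OF connected_component_subset] by metis
    hence "(LINT s:{Inf ?C<..<Sup ?C}|lborel. \<phi>' s) = \<phi> (Sup ?C) - \<phi> (Inf ?C)"
      by (intro set_integral_Ioo_FTC) (use C(2) deriv in \<open>auto intro: continuous_on_subset[OF cont]\<close>)
    thus ?thesis using An C frontier_zero by simp
  qed (simp add: set_lebesgue_integral_def)
  have "set_integrable lborel S \<phi>'"
    using set_integrable_continuous_closure[OF S cont] .
  hence "(LINT s:S|lborel. \<phi>' s) = (\<Sum>n. (LINT s:A n|lborel. \<phi>' s))"
    using lebesgue_integral_countable_add[of A lborel \<phi>', OF meas disjoint] union by simp
  thus ?thesis using component_zero by simp
qed

lemma set_integral_eq_0_by_rows:
  fixes g :: "real \<times> real \<Rightarrow> real"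
  assumes "open \<Omega>" "bounded \<Omega>" "continuous_on (closure \<Omega>) g"
    and rows: "\<And>y. (LINT x:{x. (x, y) \<in> \<Omega>}|lborel. g (x, y)) = 0"
  shows "(LINT p:\<Omega>|lborel. g p) = 0"
proof -
  let ?h = "\<lambda>p. indicator \<Omega> p *\<^sub>R g p"
  have int: "integrable (lborel \<Otimes>\<^sub>M lborel) ?h"
    using set_integrable_continuous_closure[OF assms(1-3)] by (simp add: set_integrable_def lborel_prod)
  have "(\<lambda>(x, y). ?h (x, y)) = ?h" by auto
  with int have int': "integrable (lborel \<Otimes>\<^sub>M lborel) (\<lambda>(x, y). ?h (x, y))" by simp
  have "(LINT p:\<Omega>|lborel. g p) = integral\<^sup>L (lborel \<Otimes>\<^sub>M lborel) ?h"
    by (simp add: set_lebesgue_integral_def lborel_prod)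
  also have "\<dots> = (LBINT y. LBINT x. ?h (x, y))"
    using lborel_pair.Fubini_integral[of "\<lambda>x y. ?h (x, y)", OF int'] lborel_pair.integral_fst'[OF int]
    by simp
  also have "\<dots> = 0"
    using rows by (simp add: set_lebesgue_integral_def indicator_def)
  finally show ?thesis .
qed

lemma set_integral_eq_0_by_columns:
  fixes g :: "real \<times> real \<Rightarrow> real"
  assumes "open \<Omega>" "bounded \<Omega>" "continuous_on (closure \<Omega>) g"
    and columns: "\<And>x. (LINT y:{y. (x, y) \<in> \<Omega>}|lborel. g (x, y)) = 0"
  shows "(LINT p:\<Omega>|lborel. g p) = 0"
proof -
  let ?h = "\<lambda>p. indicator \<Omega> p *\<^sub>R g p"
  have "integrable (lborel \<Otimes>\<^sub>M lborel) ?h"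
    using set_integrable_continuous_closure[OF assms(1-3)] by (simp add: set_integrable_def lborel_prod)
  hence "(LBINT x. LBINT y. ?h (x, y)) = integral\<^sup>L (lborel \<Otimes>\<^sub>M lborel) ?h"
    by (rule lborel_pair.integral_fst')
  hence "(LINT p:\<Omega>|lborel. g p) = (LBINT x. LBINT y. ?h (x, y))"
    by (simp add: set_lebesgue_integral_def lborel_prod)
  also have "\<dots> = 0"
    using columns by (simp add: set_lebesgue_integral_def indicator_def)
  finally show ?thesis .
qed

lemma line_section_props:
  fixes \<Omega> :: "(real \<times> real) set" and \<iota> :: "real \<Rightarrow> real \<times> real"
  assumes \<Omega>: "open \<Omega>" "bounded \<Omega>"
    and \<iota>: "\<iota> = (\<lambda>a. (a, b)) \<or> \<iota> = (\<lambda>a. (b, a))"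
  shows "open (\<iota> -` \<Omega>)" "bounded (\<iota> -` \<Omega>)" "closure (\<iota> -` \<Omega>) \<subseteq> \<iota> -` closure \<Omega>"
    "frontier (\<iota> -` \<Omega>) \<subseteq> \<iota> -` frontier \<Omega>"
proof -
  have \<iota>_cont: "continuous_on UNIV \<iota>" using \<iota> by (auto intro!: continuous_intros)
  show open_section: "open (\<iota> -` \<Omega>)" using \<iota>_cont \<Omega>(1) by (metis open_vimage)
  obtain B where B: "\<forall>x\<in>\<Omega>. norm x \<le> B" using \<Omega>(2) bounded_iff by blast
  have "norm a \<le> B" if "\<iota> a \<in> \<Omega>" for a
  proof -
    have "norm a \<le> norm (\<iota> a)"
      using \<iota> by (auto simp: norm_Pair intro: real_sqrt_le_mono[where x="a\<^sup>2", simplified])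
    thus ?thesis using B that by force
  qed
  thus "bounded (\<iota> -` \<Omega>)" by (auto simp: bounded_iff)
  have "closed (\<iota> -` closure \<Omega>)" using \<iota>_cont by (metis closed_closure closed_vimage)
  thus closure_section: "closure (\<iota> -` \<Omega>) \<subseteq> \<iota> -` closure \<Omega>"
    by (rule closure_minimal[rotated]) (use closure_subset in auto)
  show "frontier (\<iota> -` \<Omega>) \<subseteq> \<iota> -` frontier \<Omega>"
    using closure_section open_section \<Omega>(1) by (auto simp: frontier_def interior_open)
qed

lemma divergence_theorem_fst:
  fixes f g :: "real \<times> real \<Rightarrow> real"
  assumes \<Omega>: "open \<Omega>" "bounded \<Omega>"
    and deriv: "\<And>a b. (a, b) \<in> closure \<Omega> \<Longrightarrow> ((\<lambda>s. f (s, b)) has_real_derivative g (a, b)) (at a)"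
    and cont: "continuous_on (closure \<Omega>) g"
    and frontier_zero: "\<And>p. p \<in> frontier \<Omega> \<Longrightarrow> f p = 0"
  shows "(LINT p:\<Omega>|lborel. g p) = 0"
proof (rule set_integral_eq_0_by_rows[OF \<Omega> cont])
  fix y
  note slice = line_section_props[OF \<Omega>, of "\<lambda>a. (a, y)" y, simplified]
  show "(LINT x:{x. (x, y) \<in> \<Omega>}|lborel. g (x, y)) = 0"
  proof (rule divergence_theorem_real[where \<phi>="\<lambda>s. f (s, y)"])
    show "open {x. (x, y) \<in> \<Omega>}" "bounded {x. (x, y) \<in> \<Omega>}"
      using slice by (simp_all add: vimage_def)
    show "((\<lambda>s. f (s, y)) has_real_derivative g (s, y)) (at s)" if "s \<in> closure {x. (x, y) \<in> \<Omega>}" for s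
      using deriv that slice(3) by (auto simp: vimage_def)
    show "continuous_on (closure {x. (x, y) \<in> \<Omega>}) (\<lambda>s. g (s, y))"
      by (rule continuous_on_compose2[OF cont]) (use slice(3) in \<open>auto simp: vimage_def intro!: continuous_intros\<close>)
    show "f (s, y) = 0" if "s \<in> frontier {x. (x, y) \<in> \<Omega>}" for s
      using frontier_zero that slice(4) by (auto simp: vimage_def)
  qed
qed

lemma divergence_theorem_snd:
  fixes f g :: "real \<times> real \<Rightarrow> real"
  assumes \<Omega>: "open \<Omega>" "bounded \<Omega>"
    and deriv: "\<And>a b. (a, b) \<in> closure \<Omega> \<Longrightarrow> ((\<lambda>s. f (a, s)) has_real_derivative g (a, b)) (at b)"
    and cont: "continuous_on (closure \<Omega>) g"
    and frontier_zero: "\<And>p. p \<in> frontier \<Omega> \<Longrightarrow> f p = 0"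
  shows "(LINT p:\<Omega>|lborel. g p) = 0"
proof (rule set_integral_eq_0_by_columns[OF \<Omega> cont])
  fix x
  note slice = line_section_props[OF \<Omega>, of "\<lambda>a. (x, a)" x, simplified]
  show "(LINT y:{y. (x, y) \<in> \<Omega>}|lborel. g (x, y)) = 0"
  proof (rule divergence_theorem_real[where \<phi>="\<lambda>s. f (x, s)"])
    show "open {y. (x, y) \<in> \<Omega>}" "bounded {y. (x, y) \<in> \<Omega>}"
      using slice by (simp_all add: vimage_def)
    show "((\<lambda>s. f (x, s)) has_real_derivative g (x, s)) (at s)" if "s \<in> closure {y. (x, y) \<in> \<Omega>}" for s
      using deriv that slice(3) by (auto simp: vimage_def)
    show "continuous_on (closure {y. (x, y) \<in> \<Omega>}) (\<lambda>s. g (x, s))"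
      by (rule continuous_on_compose2[OF cont]) (use slice(3) in \<open>auto simp: vimage_def intro!: continuous_intros\<close>)
    show "f (x, s) = 0" if "s \<in> frontier {y. (x, y) \<in> \<Omega>}" for s
      using frontier_zero that slice(4) by (auto simp: vimage_def)
  qed
qed

lemma divergence_theorem_channel_fst:
  fixes f g :: "real \<times> real \<Rightarrow> real"
  assumes ab: "a < b" and L: "0 < L"
    and deriv: "\<And>x y. a \<le> x \<Longrightarrow> x \<le> b \<Longrightarrow> 0 \<le> y \<Longrightarrow> y \<le> L \<Longrightarrow>
                 ((\<lambda>s. f (s, y)) has_real_derivative g (x, y)) (at x)"
    and cont: "continuous_on ({a..b} \<times> {0..L}) g"
    and walls: "\<And>z. 0 < z \<Longrightarrow> z < L \<Longrightarrow> f (a, z) = 0 \<and> f (b, z) = 0"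
  shows "(LINT p:{a<..<b} \<times> {0<..<L}|lborel. g p) = 0"
proof (rule set_integral_eq_0_by_rows)
  show "continuous_on (closure ({a<..<b} \<times> {0<..<L})) g" using cont ab L by (simp add: closure_Times)
  fix y
  show "(LINT x:{x. (x, y) \<in> {a<..<b} \<times> {0<..<L}}|lborel. g (x, y)) = 0"
  proof (cases "y \<in> {0<..<L}")
    case True
    have "(LINT x:{a<..<b}|lborel. g (x, y)) = f (b, y) - f (a, y)"
      by (rule set_integral_Ioo_FTC)
         (use ab True deriv in \<open>auto intro!: continuous_on_compose2[OF cont] continuous_intros\<close>)
    moreover have "{x. (x, y) \<in> {a<..<b} \<times> {0<..<L}} = {a<..<b}" using True by auto
    ultimately show ?thesis using walls True by simp
  next
    case False
    hence "{x. (x, y) \<in> {a<..<b} \<times> {0<..<L}} = {}" by auto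
    thus ?thesis by (simp add: set_lebesgue_integral_def)
  qed
qed (auto simp: open_Times bounded_Times)

lemma divergence_theorem_channel_snd:
  fixes f g :: "real \<times> real \<Rightarrow> real"
  assumes ab: "a < b" and L: "0 < L"
    and deriv: "\<And>x y. a \<le> x \<Longrightarrow> x \<le> b \<Longrightarrow> 0 \<le> y \<Longrightarrow> y \<le> L \<Longrightarrow>
                 ((\<lambda>s. f (x, s)) has_real_derivative g (x, y)) (at y)"
    and cont: "continuous_on ({a..b} \<times> {0..L}) g"
    and periodic: "\<And>x. a < x \<Longrightarrow> x < b \<Longrightarrow> f (x, L) = f (x, 0)"
  shows "(LINT p:{a<..<b} \<times> {0<..<L}|lborel. g p) = 0"
proof (rule set_integral_eq_0_by_columns)
  show "continuous_on (closure ({a<..<b} \<times> {0<..<L})) g" using cont ab L by (simp add: closure_Times)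
  fix x
  show "(LINT y:{y. (x, y) \<in> {a<..<b} \<times> {0<..<L}}|lborel. g (x, y)) = 0"
  proof (cases "x \<in> {a<..<b}")
    case True
    have "(LINT y:{0<..<L}|lborel. g (x, y)) = f (x, L) - f (x, 0)"
      by (rule set_integral_Ioo_FTC)
         (use L True deriv in \<open>auto intro!: continuous_on_compose2[OF cont] continuous_intros\<close>)
    moreover have "{y. (x, y) \<in> {a<..<b} \<times> {0<..<L}} = {0<..<L}" using True by auto
    ultimately show ?thesis using periodic True by simp
  next
    case False
    hence "{y. (x, y) \<in> {a<..<b} \<times> {0<..<L}} = {}" by auto
    thus ?thesis by (simp add: set_lebesgue_integral_def)
  qed
qed (auto simp: open_Times bounded_Times)

lemma open_dom: "valid_geometry g \<Longrightarrow> open (dom g)"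
  by (cases g) (auto simp: lipschitz_domain_def open_Times)

lemma bounded_dom: "valid_geometry g \<Longrightarrow> bounded (dom g)"
  by (cases g) (auto simp: lipschitz_domain_def bounded_Times)

lemma closure_dom_subset_region: "valid_geometry g \<Longrightarrow> closure (dom g) \<subseteq> region g"
  by (cases g) (auto simp: closure_Times)

lemma set_integrable_dom:
  fixes f :: "real \<times> real \<Rightarrow> real"
  assumes "valid_geometry g" "continuous_on (closure (dom g)) f"
  shows "set_integrable lborel (dom g) f"
  using set_integrable_continuous_closure[OF open_dom[OF assms(1)] bounded_dom[OF assms(1)] assms(2)] .

text \<open>Boundary conditions under which the flux of a field through the faces normal to
  \<open>x\<^sub>2\<close>, respectively \<open>x\<^sub>3\<close>, vanishes.\<close>

fun flux_free_fst :: "geometry \<Rightarrow> (real \<times> real \<Rightarrow> real) \<Rightarrow> bool" where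
  "flux_free_fst (Bounded \<Omega>) f = (\<forall>p\<in>frontier \<Omega>. f p = 0)"
| "flux_free_fst (Periodic a b L) f = (\<forall>z. 0 < z \<and> z < L \<longrightarrow> f (a, z) = 0 \<and> f (b, z) = 0)"

fun flux_free_snd :: "geometry \<Rightarrow> (real \<times> real \<Rightarrow> real) \<Rightarrow> bool" where
  "flux_free_snd (Bounded \<Omega>) f = (\<forall>p\<in>frontier \<Omega>. f p = 0)"
| "flux_free_snd (Periodic a b L) f = (\<forall>y. a < y \<and> y < b \<longrightarrow> f (y, L) = f (y, 0))"

lemma divergence_theorem_geometry_fst:
  fixes f f' :: "real \<times> real \<Rightarrow> real"
  assumes g: "valid_geometry g"
    and "\<And>a b. (a, b) \<in> closure (dom g) \<Longrightarrow> ((\<lambda>s. f (s, b)) has_real_derivative f' (a, b)) (at a)"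
    and "continuous_on (closure (dom g)) f'"
    and "flux_free_fst g f"
  shows "(LINT p:dom g|lborel. f' p) = 0"
proof (cases g)
  case (Bounded \<Omega>)
  show ?thesis
    by (rule divergence_theorem_fst[where f=f]) (use assms Bounded in \<open>auto simp: lipschitz_domain_def\<close>)
next
  case (Periodic a b L)
  have "(LINT p:{a<..<b} \<times> {0<..<L}|lborel. f' p) = 0"
    by (rule divergence_theorem_channel_fst[where f=f]) (use assms Periodic in \<open>auto simp: closure_Times\<close>)
  thus ?thesis using Periodic by simp
qed

lemma divergence_theorem_geometry_snd:
  fixes f f' :: "real \<times> real \<Rightarrow> real"
  assumes g: "valid_geometry g"
    and "\<And>a b. (a, b) \<in> closure (dom g) \<Longrightarrow> ((\<lambda>s. f (a, s)) has_real_derivative f' (a, b)) (at b)"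
    and "continuous_on (closure (dom g)) f'"
    and "flux_free_snd g f"
  shows "(LINT p:dom g|lborel. f' p) = 0"
proof (cases g)
  case (Bounded \<Omega>)
  show ?thesis
    by (rule divergence_theorem_snd[where f=f]) (use assms Bounded in \<open>auto simp: lipschitz_domain_def\<close>)
next
  case (Periodic a b L)
  have "(LINT p:{a<..<b} \<times> {0<..<L}|lborel. f' p) = 0"
    by (rule divergence_theorem_channel_snd[where f=f]) (use assms Periodic in \<open>auto simp: closure_Times\<close>)
  thus ?thesis using Periodic by simp
qed

section \<open>Smooth functions and their sections\<close>

lemma iterD_append: "iterD vs (iterD ws h) = iterD (vs @ ws) h"
  by (induction vs) auto

lemma iterD_zero: "iterD vs (\<lambda>_. 0::real) = (\<lambda>_. 0)"
proof (induction vs)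
  case (Cons v vs)
  have "frechet_derivative (\<lambda>_. 0::real) (at p) = (\<lambda>_. 0)" for p :: 'a
    using frechet_derivative_at[OF has_derivative_const[of "0::real" "at p"]] by simp
  thus ?case using Cons by simp
qed simp

lemma smooth_on_subset: "smooth_on S h \<Longrightarrow> S' \<subseteq> S \<Longrightarrow> smooth_on S' h"
  unfolding smooth_on_def by (meson order_trans)

lemma smooth_on_iterD: "smooth_on S h \<Longrightarrow> smooth_on S (iterD vs h)"
  unfolding smooth_on_def iterD_append by fast

lemma smooth_on_zero: "smooth_on S (\<lambda>_. 0)"
  unfolding smooth_on_def iterD_zero by (intro exI[of _ UNIV]) simp

lemma smooth_on_has_derivative:
  assumes "smooth_on S h" "p \<in> S"
  shows "(h has_derivative frechet_derivative h (at p)) (at p)"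
proof -
  have "iterD [] h differentiable (at p)" using assms unfolding smooth_on_def by blast
  thus ?thesis by (simp add: frechet_derivative_works[symmetric])
qed

lemma smooth_on_continuous: "smooth_on S h \<Longrightarrow> continuous_on S h"
  by (metis continuous_at_imp_continuous_on has_derivative_continuous smooth_on_has_derivative)

lemma sdx_eq_iterD:
  "sdx j w = (if j = 2 then iterD [(1, 0)] w else if j = 3 then iterD [(0, 1)] w else (\<lambda>_. 0))"
  by (auto simp: sdx_def fun_eq_iff)

lemma smooth_on_sdx: "smooth_on S w \<Longrightarrow> smooth_on S (sdx j w)"
  unfolding sdx_eq_iterD by (simp add: smooth_on_iterD smooth_on_zero del: iterD.simps)

lemma has_real_derivative_along_line:
  fixes h :: "'a::real_normed_vector \<Rightarrow> real"
  assumes "(h has_derivative h') (at (a + c *\<^sub>R v))"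
  shows "((\<lambda>r. h (a + r *\<^sub>R v)) has_real_derivative h' v) (at c)"
proof -
  have "((\<lambda>r. a + r *\<^sub>R v) has_derivative (\<lambda>r. r *\<^sub>R v)) (at c)"
    by (auto intro!: derivative_eq_intros)
  hence "((\<lambda>r. h (a + r *\<^sub>R v)) has_derivative (\<lambda>r. h' (r *\<^sub>R v))) (at c)"
    using has_derivative_compose assms by blast
  moreover have "(\<lambda>r. h' (r *\<^sub>R v)) = (*) (h' v)"
    using linear_cmul[OF has_derivative_linear[OF assms]] by (auto simp: fun_eq_iff)
  ultimately show ?thesis by (simp add: has_field_derivative_def)
qed

lemma smooth_on_has_real_derivative_fst:
  assumes "smooth_on S w" "(a, b) \<in> S"
  shows "((\<lambda>r. w (r, b)) has_real_derivative sdx 2 w (a, b)) (at a)"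
  using has_real_derivative_along_line[of w _ "(0, b)" a "(1, 0)"]
    smooth_on_has_derivative[OF assms] by (simp add: sdx_def)

lemma smooth_on_has_real_derivative_snd:
  assumes "smooth_on S w" "(a, b) \<in> S"
  shows "((\<lambda>r. w (a, r)) has_real_derivative sdx 3 w (a, b)) (at b)"
  using has_real_derivative_along_line[of w _ "(a, 0)" b "(0, 1)"]
    smooth_on_has_derivative[OF assms] by (simp add: sdx_def)

lemma smooth_on_has_real_derivative_time:
  assumes "smooth_on S (\<lambda>(t, x). u t x)" "(s, x) \<in> S"
  shows "((\<lambda>r. u r x) has_real_derivative dt u s x) (at s)"
  using has_real_derivative_along_line[of "\<lambda>(t, x). u t x" _ "(0, x)" s "(1, 0, 0)"]
    smooth_on_has_derivative[OF assms] by (simp add: dt_def flip: zero_prod_def)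

lemma smooth_on_dt: "smooth_on S (\<lambda>(t, x). u t x) \<Longrightarrow> smooth_on S (\<lambda>(t, x). dt u t x)"
  using smooth_on_iterD[of S _ "[(1, 0, 0)]"] by (simp add: dt_def case_prod_beta')

lemma open_section:
  assumes "open T"
  shows "open {y. (s, y) \<in> T}"
proof -
  have "continuous_on UNIV (\<lambda>y. (s, y))" by (intro continuous_intros)
  thus ?thesis using open_vimage[OF assms] by (simp add: vimage_def)
qed

lemma frechet_derivative_cong_open:
  fixes f h :: "'a::real_normed_vector \<Rightarrow> real"
  assumes "open A" "x \<in> A" "\<And>y. y \<in> A \<Longrightarrow> f y = h y" "h differentiable (at x)"
  shows "frechet_derivative f (at x) = frechet_derivative h (at x)" "f differentiable (at x)"
proof -
  have "(f has_derivative frechet_derivative h (at x)) (at x)"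
    using has_derivative_transform_within_open[OF frechet_derivative_works[THEN iffD1, OF assms(4)]]
      assms(1-3) by metis
  thus "frechet_derivative f (at x) = frechet_derivative h (at x)" "f differentiable (at x)"
    by (auto simp: frechet_derivative_at[symmetric] differentiable_def)
qed

lemma section_has_derivative:
  fixes H :: "'a::real_normed_vector \<times> 'b::real_normed_vector \<Rightarrow> real"
  assumes "H differentiable (at (s, x))"
  shows "((\<lambda>y. H (s, y)) has_derivative (\<lambda>v. frechet_derivative H (at (s, x)) (0, v))) (at x)"
proof -
  have "((\<lambda>y. (s, y)) has_derivative (\<lambda>v. (0, v))) (at x)"
    by (auto intro!: derivative_eq_intros)
  thus ?thesis using has_derivative_compose assms frechet_derivative_works by blast
qed

lemma iterD_section:
  fixes H :: "'a::real_normed_vector \<times> 'b::real_normed_vector \<Rightarrow> real"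
  assumes T: "open T" and smooth: "\<And>ws p. p \<in> T \<Longrightarrow> iterD ws H differentiable (at p)"
  shows "(s, y) \<in> T \<Longrightarrow> iterD vs (\<lambda>y. H (s, y)) y = iterD (map (\<lambda>v. (0, v)) vs) H (s, y)"
proof (induction vs arbitrary: y)
  case (Cons v vs)
  let ?H = "iterD (map (\<lambda>v. (0, v)) vs) H"
  have slice: "open {y. (s, y) \<in> T}" using T by (rule open_section)
  have "((\<lambda>y. ?H (s, y)) has_derivative (\<lambda>w. frechet_derivative ?H (at (s, y)) (0, w))) (at y)"
    by (rule section_has_derivative) (use smooth Cons.prems in blast)
  moreover have "frechet_derivative (iterD vs (\<lambda>y. H (s, y))) (at y)
      = frechet_derivative (\<lambda>y. ?H (s, y)) (at y)"
    by (rule frechet_derivative_cong_open(1)[OF slice])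
       (use Cons calculation in \<open>auto simp: differentiable_def\<close>)
  ultimately show ?case by (simp add: frechet_derivative_at[symmetric])
qed simp

lemma smooth_on_section:
  fixes H :: "'a::real_normed_vector \<times> 'b::real_normed_vector \<Rightarrow> real"
  assumes "smooth_on S H" "\<And>x. x \<in> R \<Longrightarrow> (s, x) \<in> S"
  shows "smooth_on R (\<lambda>y. H (s, y))"
proof -
  obtain T where T: "open T" "S \<subseteq> T" and smooth: "\<And>ws p. p \<in> T \<Longrightarrow> iterD ws H differentiable (at p)"
    using assms(1) unfolding smooth_on_def by blast
  have slice: "open {y. (s, y) \<in> T}" using T(1) by (rule open_section)
  have "iterD vs (\<lambda>y. H (s, y)) differentiable (at y)" if "(s, y) \<in> T" for vs y
  proof (rule frechet_derivative_cong_open(2)[OF slice])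
    show "(\<lambda>z. iterD (map (\<lambda>v. (0, v)) vs) H (s, z)) differentiable (at y)"
      using section_has_derivative smooth that unfolding differentiable_def by blast
  qed (use iterD_section[OF T(1) smooth] that in auto)
  thus ?thesis
    unfolding smooth_on_def using slice T(2) assms(2) by blast
qed

lemma set_integral_nonneg:
  fixes f :: "'a \<Rightarrow> real"
  assumes "\<And>x. x \<in> A \<Longrightarrow> 0 \<le> f x"
  shows "0 \<le> (LINT x:A|M. f x)"
  unfolding set_lebesgue_integral_def
  by (rule integral_nonneg_AE) (use assms in \<open>auto split: split_indicator\<close>)

lemma set_integral_sum:
  fixes f :: "'i \<Rightarrow> 'a \<Rightarrow> real"
  assumes "finite I" "\<And>i. i \<in> I \<Longrightarrow> set_integrable M A (f i)"
  shows "(LINT x:A|M. (\<Sum>i\<in>I. f i x)) = (\<Sum>i\<in>I. LINT x:A|M. f i x)"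
  using assms unfolding set_integrable_def set_lebesgue_integral_def scaleR_sum_right
  by (intro Bochner_Integration.integral_sum) simp

lemma set_integrable_sum:
  fixes f :: "'i \<Rightarrow> 'a \<Rightarrow> real"
  assumes "\<And>i. i \<in> I \<Longrightarrow> set_integrable M A (f i)"
  shows "set_integrable M A (\<lambda>x. \<Sum>i\<in>I. f i x)"
  using assms unfolding set_integrable_def scaleR_sum_right by (intro Bochner_Integration.integrable_sum) simp

lemma set_nn_integral_eq_set_integral:
  fixes f :: "'a::euclidean_space \<Rightarrow> real"
  assumes "set_integrable lborel A f" "\<And>x. x \<in> A \<Longrightarrow> 0 \<le> f x"
  shows "(\<integral>\<^sup>+ x\<in>A. ennreal (f x) \<partial>lborel) = ennreal (LINT x:A|lborel. f x)"
proof -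
  have "(\<integral>\<^sup>+ x\<in>A. ennreal (f x) \<partial>lborel) = (\<integral>\<^sup>+ x. ennreal (indicator A x *\<^sub>R f x) \<partial>lborel)"
    by (rule nn_integral_cong) (auto split: split_indicator)
  also have "\<dots> = ennreal (LBINT x. indicator A x *\<^sub>R f x)"
    by (rule nn_integral_eq_integral)
       (use assms in \<open>auto simp: set_integrable_def split: split_indicator\<close>)
  finally show ?thesis by (simp add: set_lebesgue_integral_def)
qed

lemma set_integrable_continuous_compact:
  fixes f :: "'a::euclidean_space \<Rightarrow> real"
  assumes "compact K" "continuous_on K f" "A \<in> sets lborel" "A \<subseteq> K"
  shows "set_integrable lborel A f"
proof -
  have "set_integrable lborel K f"
    unfolding set_integrable_def using borel_integrable_compact[OF assms(1,2)] by simp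
  thus ?thesis by (rule set_integrable_subset) (use assms in auto)
qed

lemma continuous_on_section:
  fixes f :: "'a::topological_space \<times> 'b::topological_space \<Rightarrow> real"
  assumes "continuous_on (A \<times> K) f" "s \<in> A"
  shows "continuous_on K (\<lambda>x. f (s, x))"
  by (rule continuous_on_compose2[OF assms(1)]) (use assms(2) in \<open>auto intro!: continuous_intros\<close>)

lemma continuous_on_parametric_set_integral:
  fixes f :: "real \<times> (real \<times> real) \<Rightarrow> real"
  assumes \<Omega>: "open \<Omega>" "bounded \<Omega>" and cont: "continuous_on ({a..b} \<times> closure \<Omega>) f"
  shows "continuous_on {a..b} (\<lambda>s. LINT x:\<Omega>|lborel. f (s, x))"
  unfolding continuous_on_iff
proof (intro ballI allI impI)
  fix s0 and \<epsilon> :: real assume s0: "s0 \<in> {a..b}" and \<epsilon>: "0 < \<epsilon>"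
  define m where "m = measure lborel \<Omega>"
  have m: "m \<ge> 0" "emeasure lborel \<Omega> \<noteq> \<infinity>"
    using emeasure_bounded_finite[OF \<Omega>(2)] by (auto simp: m_def)
  have "uniformly_continuous_on ({a..b} \<times> closure \<Omega>) f"
    using compact_uniformly_continuous[OF cont] \<Omega>(2) by (simp add: compact_Times compact_closure)
  moreover have "\<epsilon> / (m + 1) > 0" using \<epsilon> m by simp
  ultimately obtain \<delta> where \<delta>: "\<delta> > 0" and close: "\<And>p p'. p \<in> {a..b} \<times> closure \<Omega> \<Longrightarrow>
      p' \<in> {a..b} \<times> closure \<Omega> \<Longrightarrow> dist p' p < \<delta> \<Longrightarrow> dist (f p') (f p) < \<epsilon> / (m + 1)"
    unfolding uniformly_continuous_on_def by metis
  show "\<exists>\<delta>>0. \<forall>s\<in>{a..b}. dist s s0 < \<delta> \<longrightarrow>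
          dist (LINT x:\<Omega>|lborel. f (s, x)) (LINT x:\<Omega>|lborel. f (s0, x)) < \<epsilon>"
  proof (intro exI[of _ \<delta>] conjI ballI impI)
    fix s assume s: "s \<in> {a..b}" and ds: "dist s s0 < \<delta>"
    have int: "set_integrable lborel \<Omega> (\<lambda>x. f (r, x))" if "r \<in> {a..b}" for r
      by (rule set_integrable_continuous_closure[OF \<Omega> continuous_on_section[OF cont that]])
    have diff: "set_integrable lborel \<Omega> (\<lambda>x. f (s, x) - f (s0, x))"
      using int[OF s] int[OF s0] by (rule set_integral_diff)
    have "dist (LINT x:\<Omega>|lborel. f (s, x)) (LINT x:\<Omega>|lborel. f (s0, x))
          = norm (LINT x:\<Omega>|lborel. f (s, x) - f (s0, x))"
      by (simp add: dist_real_def set_integral_diff(2)[OF int[OF s] int[OF s0]])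
    also have "\<dots> \<le> (LINT x:\<Omega>|lborel. norm (f (s, x) - f (s0, x)))"
      by (rule set_integral_norm_bound[OF diff])
    also have "\<dots> \<le> (LINT x:\<Omega>|lborel. \<epsilon> / (m + 1))"
    proof (rule set_integral_mono)
      show "set_integrable lborel \<Omega> (\<lambda>x. norm (f (s, x) - f (s0, x)))"
        using set_integrable_norm[OF diff] by simp
      show "set_integrable lborel \<Omega> (\<lambda>x. \<epsilon> / (m + 1))"
        using m(2) \<Omega>(1) by (auto simp: set_integrable_def integrable_indicator_iff less_top
           intro!: integrable_divide_zero integrable_mult_left)
      fix x assume "x \<in> \<Omega>"
      hence "dist (f (s, x)) (f (s0, x)) < \<epsilon> / (m + 1)"
        using close[of "(s0, x)" "(s, x)"] s s0 ds closure_subset by (auto simp: dist_Pair_Pair)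
      thus "norm (f (s, x) - f (s0, x)) \<le> \<epsilon> / (m + 1)" by (simp add: dist_norm)
    qed
    also have "\<dots> = \<epsilon> * (m / (m + 1))"
      using m(2) \<Omega>(1) by (simp add: set_integral_const m_def)
    also have "\<dots> < \<epsilon>"
      using mult_strict_left_mono[of "m / (m + 1)" 1 \<epsilon>] m \<epsilon> by simp
    finally show "dist (LINT x:\<Omega>|lborel. f (s, x)) (LINT x:\<Omega>|lborel. f (s0, x)) < \<epsilon>" .
  qed (rule \<delta>)
qed

text \<open>Differentiation under the integral sign, in integrated form (Fubini plus the fundamental
  theorem of calculus along each line \<open>s \<mapsto> (s, x)\<close>).\<close>

lemma set_integral_FTC_parametric:
  fixes F F' :: "real \<times> (real \<times> real) \<Rightarrow> real"
  assumes \<Omega>: "open \<Omega>" "bounded \<Omega>" and t: "0 \<le> t"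
    and cont: "continuous_on ({0..t} \<times> closure \<Omega>) F" "continuous_on ({0..t} \<times> closure \<Omega>) F'"
    and deriv: "\<And>s x. s \<in> {0..t} \<Longrightarrow> x \<in> closure \<Omega> \<Longrightarrow>
                 ((\<lambda>r. F (r, x)) has_real_derivative F' (s, x)) (at s)"
  shows "(LINT x:\<Omega>|lborel. F (t, x)) - (LINT x:\<Omega>|lborel. F (0, x))
           = integral {0..t} (\<lambda>s. LINT x:\<Omega>|lborel. F' (s, x))"
proof -
  let ?W = "\<lambda>s. LINT x:\<Omega>|lborel. F' (s, x)"
  let ?G = "\<lambda>p::real \<times> (real \<times> real). indicator ({0..t} \<times> \<Omega>) p *\<^sub>R F' p"
  have "{0..t} \<times> \<Omega> \<in> sets lborel" using \<Omega>(1) borel_Times[of "{0..t}" \<Omega>] by auto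
  hence "set_integrable lborel ({0..t} \<times> \<Omega>) F'"
    by (intro set_integrable_continuous_compact[OF _ cont(2)])
       (use \<Omega>(2) closure_subset in \<open>auto simp: compact_Times compact_closure\<close>)
  hence "integrable (lborel \<Otimes>\<^sub>M lborel) ?G" by (simp add: set_integrable_def lborel_prod)
  moreover have "(\<lambda>(s, x). ?G (s, x)) = ?G" by auto
  ultimately have int: "integrable (lborel \<Otimes>\<^sub>M lborel) (\<lambda>(s, x). ?G (s, x))" by simp
  have line: "F (t, x) - F (0, x) = (LBINT s. indicator {0..t} s *\<^sub>R F' (s, x))"
    if x: "x \<in> closure \<Omega>" for x
  proof -
    have "(LBINT s. indicator {0..t} s *\<^sub>R F' (s, x)) = F (t, x) - F (0, x)"
    proof (rule integral_FTC_Icc[OF t])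
      show "((\<lambda>r. F (r, x)) has_vector_derivative F' (s, x)) (at s within {0..t})"
        if "0 \<le> s" "s \<le> t" for s
        using deriv[of s x] x that
        by (auto simp: has_real_derivative_iff_has_vector_derivative[symmetric]
                 intro: has_field_derivative_at_within)
      show "continuous_on {0..t} (\<lambda>s. F' (s, x))"
        by (rule continuous_on_compose2[OF cont(2)]) (use x in \<open>auto intro!: continuous_intros\<close>)
    qed
    thus ?thesis by simp
  qed
  have intF: "set_integrable lborel \<Omega> (\<lambda>x. F (s, x))" if "s \<in> {0..t}" for s
    by (rule set_integrable_continuous_closure[OF \<Omega> continuous_on_section[OF cont(1) that]])
  have "continuous_on {0..t} ?W" by (rule continuous_on_parametric_set_integral[OF \<Omega> cont(2)])
  hence intW: "set_integrable lborel {0..t} ?W"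
    by (rule set_integrable_continuous_compact[OF compact_Icc]) auto
  have "(LINT x:\<Omega>|lborel. F (t, x)) - (LINT x:\<Omega>|lborel. F (0, x))
        = (LINT x:\<Omega>|lborel. F (t, x) - F (0, x))"
    using set_integral_diff(2)[OF intF intF, of t 0] t by simp
  also have "\<dots> = (LINT x:\<Omega>|lborel. (LBINT s. indicator {0..t} s *\<^sub>R F' (s, x)))"
    by (rule set_lebesgue_integral_cong) (use \<Omega>(1) line closure_subset in auto)
  also have "\<dots> = (LBINT x. LBINT s. ?G (s, x))"
    unfolding set_lebesgue_integral_def
    by (rule Bochner_Integration.integral_cong) (auto simp: indicator_times split: split_indicator)
  also have "\<dots> = (LBINT s. LBINT x. ?G (s, x))"
    using lborel_pair.Fubini_integral[of "\<lambda>s x. ?G (s, x)", OF int] by simp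
  also have "\<dots> = (LINT s:{0..t}|lborel. ?W s)"
    unfolding set_lebesgue_integral_def
    by (rule Bochner_Integration.integral_cong) (auto simp: indicator_times split: split_indicator)
  also have "\<dots> = integral {0..t} ?W"
    by (rule set_borel_integral_eq_integral[OF intW])
  finally show ?thesis .
qed

lemma nn_integral_time_slab:
  fixes f :: "real \<times> (real \<times> real) \<Rightarrow> real"
  assumes \<Omega>: "open \<Omega>" "bounded \<Omega>" and T: "0 \<le> T"
    and cont: "continuous_on ({0..T} \<times> closure \<Omega>) f"
    and nonneg: "\<And>t x. t \<in> {0..T} \<Longrightarrow> x \<in> closure \<Omega> \<Longrightarrow> 0 \<le> f (t, x)"
  shows "(\<integral>\<^sup>+ t\<in>{0..T}. (\<integral>\<^sup>+ x\<in>\<Omega>. ennreal (f (t, x)) \<partial>lborel) \<partial>lborel)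
       = ennreal (integral {0..T} (\<lambda>s. LINT x:\<Omega>|lborel. f (s, x)))"
proof -
  let ?m = "\<lambda>s. LINT x:\<Omega>|lborel. f (s, x)"
  have nonneg': "0 \<le> f (t, x)" if "t \<in> {0..T}" "x \<in> \<Omega>" for t x
    using nonneg that closure_subset by blast
  have "continuous_on {0..T} ?m" by (rule continuous_on_parametric_set_integral[OF \<Omega> cont])
  hence int: "set_integrable lborel {0..T} ?m"
    by (rule set_integrable_continuous_compact[OF compact_Icc]) auto
  have "(\<integral>\<^sup>+ x\<in>\<Omega>. ennreal (f (t, x)) \<partial>lborel) = ennreal (?m t)" if "t \<in> {0..T}" for t
    by (rule set_nn_integral_eq_set_integral[OF
          set_integrable_continuous_closure[OF \<Omega> continuous_on_section[OF cont that]]])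
       (use nonneg' that in blast)
  hence "(\<integral>\<^sup>+ t\<in>{0..T}. (\<integral>\<^sup>+ x\<in>\<Omega>. ennreal (f (t, x)) \<partial>lborel) \<partial>lborel)
      = (\<integral>\<^sup>+ t\<in>{0..T}. ennreal (?m t) \<partial>lborel)"
    by (intro nn_integral_cong) (auto split: split_indicator)
  also have "\<dots> = ennreal (LINT t:{0..T}|lborel. ?m t)"
    by (rule set_nn_integral_eq_set_integral[OF int])
       (use nonneg' in \<open>auto intro!: set_integral_nonneg\<close>)
  also have "\<dots> = ennreal (integral {0..T} ?m)"
    using set_borel_integral_eq_integral(2)[OF int] by simp
  finally show ?thesis .
qed

text \<open>Monotone convergence over the slabs \<open>[0, n] \<times> \<Omega>\<close> reduces a bound on the space-time integral
  over \<open>[0, \<infinity>) \<times> \<Omega>\<close> to uniform bounds on the finite-time integrals.\<close>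

lemma nn_integral_half_line_le:
  fixes f :: "real \<times> (real \<times> real) \<Rightarrow> real" and X :: ennreal
  assumes \<Omega>: "open \<Omega>" "bounded \<Omega>"
    and cont: "\<And>T. 0 \<le> T \<Longrightarrow> continuous_on ({0..T} \<times> closure \<Omega>) f"
    and nonneg: "\<And>t x. 0 \<le> t \<Longrightarrow> x \<in> closure \<Omega> \<Longrightarrow> 0 \<le> f (t, x)"
    and bound: "\<And>T. 0 \<le> T \<Longrightarrow> ennreal (integral {0..T} (\<lambda>s. LINT x:\<Omega>|lborel. f (s, x))) \<le> X"
  shows "(\<integral>\<^sup>+ t\<in>{0..}. (\<integral>\<^sup>+ x\<in>\<Omega>. ennreal (f (t, x)) \<partial>lborel) \<partial>lborel) \<le> X"
proof -
  let ?h = "\<lambda>t. \<integral>\<^sup>+ x\<in>\<Omega>. ennreal (f (t, x)) \<partial>lborel"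
  have nonneg': "0 \<le> f (t, x)" if "0 \<le> t" "x \<in> \<Omega>" for t x
    using nonneg that closure_subset by blast
  define G where "G n t = ?h t * indicator {0..real n} t" for n :: nat and t
  have G_measurable: "G n \<in> borel_measurable lborel" for n
  proof -
    let ?m = "\<lambda>t. LINT x:\<Omega>|lborel. f (t, x)"
    have "?h t = ennreal (?m t)" if "t \<in> {0..real n}" for t
      by (rule set_nn_integral_eq_set_integral[OF set_integrable_continuous_closure[OF \<Omega>
            continuous_on_section[OF cont[of "real n"] that]]])
         (use nonneg' that in auto)
    hence "G n = (\<lambda>t. ennreal (indicator {0..real n} t *\<^sub>R ?m t))"
      by (auto simp: G_def fun_eq_iff split: split_indicator)
    moreover have "continuous_on {0..real n} ?m"
      by (rule continuous_on_parametric_set_integral[OF \<Omega> cont]) simp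
    hence "(\<lambda>t. indicator {0..real n} t *\<^sub>R ?m t) \<in> borel_measurable borel"
      by (intro borel_measurable_continuous_on_indicator) auto
    ultimately show ?thesis by simp
  qed
  have inc: "incseq G"
    unfolding incseq_def le_fun_def G_def by (auto intro!: mult_left_mono split: split_indicator)
  have sup: "(SUP n. G n t) = ?h t * indicator {0..} t" for t
  proof (cases "0 \<le> t")
    case True
    obtain N :: nat where N: "t \<le> real N" using real_arch_simple by blast
    have "G n t \<le> G N t" for n using True N by (auto simp: G_def split: split_indicator)
    hence "(SUP n. G n t) = G N t" by (intro antisym SUP_least SUP_upper) auto
    thus ?thesis using True N by (simp add: G_def indicator_def)
  qed (simp add: G_def indicator_def)
  have "(\<integral>\<^sup>+ t\<in>{0..}. ?h t \<partial>lborel) = (\<integral>\<^sup>+ t. (SUP n. G n t) \<partial>lborel)"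
    by (simp add: sup)
  also have "\<dots> = (SUP n. integral\<^sup>N lborel (G n))"
    by (rule nn_integral_monotone_convergence_SUP[OF inc G_measurable])
  also have "\<dots> \<le> X"
  proof (rule SUP_least)
    fix n
    have "integral\<^sup>N lborel (G n) = ennreal (integral {0..real n} (\<lambda>s. LINT x:\<Omega>|lborel. f (s, x)))"
      unfolding G_def by (rule nn_integral_time_slab[OF \<Omega> _ cont]) (use nonneg in auto)
    thus "integral\<^sup>N lborel (G n) \<le> X" using bound[of "real n"] by simp
  qed
  finally show ?thesis .
qed

section \<open>The energy inequality at one instant\<close>

lemma sum_atLeastAtMost_1_3: "(\<Sum>i\<in>{1..3::nat}. f i) = f 1 + f 2 + f 3"
  by (simp add: eval_nat_numeral atLeastAtMostSuc_conv ac_simps)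

definition dissipation_density ::
  "real \<Rightarrow> (nat \<Rightarrow> nat \<Rightarrow> real) \<Rightarrow> (nat \<Rightarrow> real \<times> real \<Rightarrow> real) \<Rightarrow> real \<Rightarrow> (nat \<Rightarrow> real)
    \<Rightarrow> (nat \<Rightarrow> real \<times> real \<Rightarrow> real) \<Rightarrow> (nat \<Rightarrow> real \<times> real \<Rightarrow> real) \<Rightarrow> nat \<Rightarrow> real \<times> real \<Rightarrow> real"
  where
  "dissipation_density Rey F U C q w f i x =
     q i * C / Rey * (w i x)\<^sup>2
     + q i * (\<Sum>j\<in>{1..3}. U j x * w i x * sdx j (w i) x)
     + q i * (\<Sum>j\<in>{1..3}. w j x * w i x * sdx j (U i) x)
     - q i * w i x * (\<Sum>j\<in>{1..3}. F i j * w j x)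
     - q i * w i x * f i x"

text \<open>The pointwise energy balance, with the values of the fields and of their derivatives at a
  point abstracted: \<open>a i j\<close> stands for \<open>\<partial>\<^sub>j w\<^sub>i\<close>, \<open>c i j\<close> for \<open>\<partial>\<^sub>j\<partial>\<^sub>j w\<^sub>i\<close>, \<open>sU i j\<close> for \<open>\<partial>\<^sub>j U\<^sub>i\<close> and
  \<open>P j\<close> for \<open>\<partial>\<^sub>j p\<close>. The weights \<open>q\<^sub>2 = q\<^sub>3\<close> are what lets the pressure term
  \<open>q\<^sub>2 w\<^sub>2 \<partial>\<^sub>2p + q\<^sub>3 w\<^sub>3 \<partial>\<^sub>3p\<close> combine with \<open>\<partial>\<^sub>2w\<^sub>2 + \<partial>\<^sub>3w\<^sub>3 = 0\<close> into a divergence.\<close>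

lemma energy_density_identity:
  fixes q w wt U P f :: "nat \<Rightarrow> real" and a c sU F :: "nat \<Rightarrow> nat \<Rightarrow> real" and Re C p :: real
  assumes momentum: "\<And>i. i \<in> {1..3} \<Longrightarrow> wt i = 1 / Re * (c i 2 + c i 3)
          - (\<Sum>j\<in>{1..3}. w j * a i j) - (\<Sum>j\<in>{1..3}. U j * a i j)
          - (\<Sum>j\<in>{1..3}. w j * sU i j) - P i + (\<Sum>j\<in>{1..3}. F i j * w j) + f i"
    and no_fst: "\<And>i. a i 1 = 0" "P 1 = 0"
    and div: "(\<Sum>j\<in>{1..3}. a j j) = 0" and q23: "q 2 = q 3"
  shows "(\<Sum>i\<in>{1..3}. q i * w i * wt i) =
      ((\<Sum>i\<in>{1..3}. q i * (1/Re * ((a i 2)\<^sup>2 + w i * c i 2) - 1/2 * a 2 2 * (w i)\<^sup>2 - w 2 * w i * a i 2))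
        - q 2 * (a 2 2 * p + w 2 * P 2))
    + ((\<Sum>i\<in>{1..3}. q i * (1/Re * ((a i 3)\<^sup>2 + w i * c i 3) - 1/2 * a 3 3 * (w i)\<^sup>2 - w 3 * w i * a i 3))
        - q 2 * (a 3 3 * p + w 3 * P 3))
    + (\<Sum>i\<in>{1..3}. q i / Re * (C * (w i)\<^sup>2 - ((a i 2)\<^sup>2 + (a i 3)\<^sup>2))
        - (q i * C / Re * (w i)\<^sup>2 + q i * (\<Sum>j\<in>{1..3}. U j * w i * a i j)
           + q i * (\<Sum>j\<in>{1..3}. w j * w i * sU i j) - q i * w i * (\<Sum>j\<in>{1..3}. F i j * w j)
           - q i * w i * f i))"
proof -
  have a33: "a 3 3 = - a 2 2" using div no_fst(1)[of 1] unfolding sum_atLeastAtMost_1_3 by linarith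
  have m: "(1::nat) \<in> {1..3}" "(2::nat) \<in> {1..3}" "(3::nat) \<in> {1..3}" by auto
  have "(\<Sum>i\<in>{1..3}. q i * w i * wt i) =
      ((\<Sum>i\<in>{1..3}. q i * (1/Re * ((a i 2)\<^sup>2 + w i * c i 2) - 1/2 * a 2 2 * (w i)\<^sup>2 - w 2 * w i * a i 2))
        - q 2 * (a 2 2 * p + w 2 * P 2))
    + ((\<Sum>i\<in>{1..3}. q i * (1/Re * ((a i 3)\<^sup>2 + w i * c i 3) - 1/2 * a 3 3 * (w i)\<^sup>2 - w 3 * w i * a i 3))
        - q 2 * (a 3 3 * p + w 3 * P 3))
    + (\<Sum>i\<in>{1..3}. q i * (- 1/Re * ((a i 2)\<^sup>2 + (a i 3)\<^sup>2) - w i * (\<Sum>j\<in>{1..3}. U j * a i j)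
        - w i * (\<Sum>j\<in>{1..3}. w j * sU i j) + w i * (\<Sum>j\<in>{1..3}. F i j * w j) + w i * f i))"
    unfolding sum_atLeastAtMost_1_3 momentum[OF m(1), unfolded sum_atLeastAtMost_1_3]
      momentum[OF m(2), unfolded sum_atLeastAtMost_1_3] momentum[OF m(3), unfolded sum_atLeastAtMost_1_3]
      no_fst a33 q23
    by (simp add: power2_eq_square field_simps) algebra
  moreover have "q i * (- 1/Re * ((a i 2)\<^sup>2 + (a i 3)\<^sup>2) - w i * (\<Sum>j\<in>{1..3}. U j * a i j)
        - w i * (\<Sum>j\<in>{1..3}. w j * sU i j) + w i * (\<Sum>j\<in>{1..3}. F i j * w j) + w i * f i)
      = q i / Re * (C * (w i)\<^sup>2 - ((a i 2)\<^sup>2 + (a i 3)\<^sup>2))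
        - (q i * C / Re * (w i)\<^sup>2 + q i * (\<Sum>j\<in>{1..3}. U j * w i * a i j)
           + q i * (\<Sum>j\<in>{1..3}. w j * w i * sU i j) - q i * w i * (\<Sum>j\<in>{1..3}. F i j * w j)
           - q i * w i * f i)" for i
    by (simp add: divide_inverse algebra_simps sum_distrib_left)
  ultimately show ?thesis by simp
qed

lemma continuous_on_closure_dom_if_smooth:
  assumes "valid_geometry g" "smooth_on (region g) h"
  shows "continuous_on (closure (dom g)) h"
  using assms closure_dom_subset_region continuous_on_subset smooth_on_continuous by blast

lemma periodic_derivative_eq:
  fixes h :: "real \<Rightarrow> real"
  assumes "\<And>z. h (z + L) = h z"
    and "(h has_real_derivative d0) (at 0)" and "(h has_real_derivative dL) (at L)"
  shows "dL = d0"
proof -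
  have "((\<lambda>r. h (r + L)) has_real_derivative dL * 1) (at 0)"
    by (rule DERIV_chain2[where f=h]) (use assms(3) in \<open>auto intro!: derivative_eq_intros\<close>)
  thus ?thesis using assms(1,2) DERIV_unique by simp
qed

text \<open>One instant of the perturbation equations: \<open>w\<close> is the velocity, \<open>wt\<close> its time derivative,
  \<open>\<pi>\<close> the pressure and \<open>f\<close> the forcing at that instant.\<close>

locale momentum_slice =
  fixes g :: geometry and Rey :: real and F :: "nat \<Rightarrow> nat \<Rightarrow> real"
    and U w wt f :: "nat \<Rightarrow> real \<times> real \<Rightarrow> real" and \<pi> :: "real \<times> real \<Rightarrow> real"
  assumes valid: "valid_geometry g"
    and smooth_U: "\<And>i. i \<in> {1..3} \<Longrightarrow> smooth_on (region g) (U i)"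
    and smooth_w: "\<And>i. i \<in> {1..3} \<Longrightarrow> smooth_on (region g) (w i)"
    and smooth_\<pi>: "smooth_on (region g) \<pi>"
    and continuous_f: "\<And>i. i \<in> {1..3} \<Longrightarrow> continuous_on (closure (dom g)) (f i)"
    and boundary_w: "\<And>i. i \<in> {1..3} \<Longrightarrow> bc g (w i)"
    and periodic_\<pi>: "periodic_field g \<pi>"
    and divergence_free: "\<And>x. x \<in> dom g \<Longrightarrow> (\<Sum>j\<in>{1..3}. sdx j (w j) x) = 0"
    and momentum: "\<And>i x. i \<in> {1..3} \<Longrightarrow> x \<in> dom g \<Longrightarrow>
      wt i x = 1 / Rey * slap (w i) x
        - (\<Sum>j\<in>{1..3}. w j x * sdx j (w i) x)
        - (\<Sum>j\<in>{1..3}. U j x * sdx j (w i) x)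
        - (\<Sum>j\<in>{1..3}. w j x * sdx j (U i) x)
        - sdx i \<pi> x + (\<Sum>j\<in>{1..3}. F i j * w j x) + f i x"
begin

lemma continuous_fields:
  assumes "i \<in> {1..3}"
  shows "continuous_on (closure (dom g)) (w i)" "continuous_on (closure (dom g)) (sdx j (w i))"
    "continuous_on (closure (dom g)) (sdx j (sdx k (w i)))"
    "continuous_on (closure (dom g)) \<pi>" "continuous_on (closure (dom g)) (sdx j \<pi>)"
    "continuous_on (closure (dom g)) (U i)" "continuous_on (closure (dom g)) (sdx j (U i))"
  using continuous_on_closure_dom_if_smooth[OF valid] smooth_on_sdx
    smooth_w[OF assms] smooth_\<pi> smooth_U[OF assms] by blast+

definition flux :: "(nat \<Rightarrow> real) \<Rightarrow> nat \<Rightarrow> real \<times> real \<Rightarrow> real" where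
  "flux q k x = (\<Sum>i\<in>{1..3}. q i * (1/Rey * (w i x * sdx k (w i) x) - 1/2 * w k x * (w i x)\<^sup>2))
                 - q 2 * (w k x * \<pi> x)"

definition flux_deriv :: "(nat \<Rightarrow> real) \<Rightarrow> nat \<Rightarrow> real \<times> real \<Rightarrow> real" where
  "flux_deriv q k x =
     (\<Sum>i\<in>{1..3}. q i * (1/Rey * ((sdx k (w i) x)\<^sup>2 + w i x * sdx k (sdx k (w i)) x)
        - 1/2 * sdx k (w k) x * (w i x)\<^sup>2 - w k x * w i x * sdx k (w i) x))
     - q 2 * (sdx k (w k) x * \<pi> x + w k x * sdx k \<pi> x)"

lemma continuous_flux_deriv:
  assumes "k \<in> {1..3}"
  shows "continuous_on (closure (dom g)) (flux_deriv q k)"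
  unfolding flux_deriv_def[abs_def]
  by (intro continuous_intros) (rule continuous_fields; use assms in simp)+

lemma flux_has_derivative_fst:
  assumes "(y, z) \<in> closure (dom g)"
  shows "((\<lambda>r. flux q 2 (r, z)) has_real_derivative flux_deriv q 2 (y, z)) (at y)"
proof -
  have R: "(y, z) \<in> region g" using assms closure_dom_subset_region[OF valid] by blast
  have m: "(1::nat) \<in> {1..3}" "(2::nat) \<in> {1..3}" "(3::nat) \<in> {1..3}" by auto
  note D = smooth_on_has_real_derivative_fst[OF smooth_w[OF m(1)] R]
    smooth_on_has_real_derivative_fst[OF smooth_w[OF m(2)] R]
    smooth_on_has_real_derivative_fst[OF smooth_w[OF m(3)] R]
    smooth_on_has_real_derivative_fst[OF smooth_on_sdx[OF smooth_w[OF m(1)]] R]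
    smooth_on_has_real_derivative_fst[OF smooth_on_sdx[OF smooth_w[OF m(2)]] R]
    smooth_on_has_real_derivative_fst[OF smooth_on_sdx[OF smooth_w[OF m(3)]] R]
    smooth_on_has_real_derivative_fst[OF smooth_\<pi> R]
  show ?thesis
    unfolding flux_def flux_deriv_def sum_atLeastAtMost_1_3
    by (rule derivative_eq_intros D refl)+ (simp add: algebra_simps power2_eq_square)
qed

lemma flux_has_derivative_snd:
  assumes "(y, z) \<in> closure (dom g)"
  shows "((\<lambda>r. flux q 3 (y, r)) has_real_derivative flux_deriv q 3 (y, z)) (at z)"
proof -
  have R: "(y, z) \<in> region g" using assms closure_dom_subset_region[OF valid] by blast
  have m: "(1::nat) \<in> {1..3}" "(2::nat) \<in> {1..3}" "(3::nat) \<in> {1..3}" by auto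
  note D = smooth_on_has_real_derivative_snd[OF smooth_w[OF m(1)] R]
    smooth_on_has_real_derivative_snd[OF smooth_w[OF m(2)] R]
    smooth_on_has_real_derivative_snd[OF smooth_w[OF m(3)] R]
    smooth_on_has_real_derivative_snd[OF smooth_on_sdx[OF smooth_w[OF m(1)]] R]
    smooth_on_has_real_derivative_snd[OF smooth_on_sdx[OF smooth_w[OF m(2)]] R]
    smooth_on_has_real_derivative_snd[OF smooth_on_sdx[OF smooth_w[OF m(3)]] R]
    smooth_on_has_real_derivative_snd[OF smooth_\<pi> R]
  show ?thesis
    unfolding flux_def flux_deriv_def sum_atLeastAtMost_1_3
    by (rule derivative_eq_intros D refl)+ (simp add: algebra_simps power2_eq_square)
qed

lemma flux_free: "flux_free_fst g (flux q 2)" "flux_free_snd g (flux q 3)"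
proof -
  have m: "(1::nat) \<in> {1..3}" "(2::nat) \<in> {1..3}" "(3::nat) \<in> {1..3}" by auto
  note bc = boundary_w[OF m(1)] boundary_w[OF m(2)] boundary_w[OF m(3)]
  show "flux_free_fst g (flux q 2)"
    using bc unfolding flux_def sum_atLeastAtMost_1_3 by (cases g) auto
  show "flux_free_snd g (flux q 3)"
  proof (cases g)
    case (Bounded \<Omega>)
    thus ?thesis using bc unfolding flux_def sum_atLeastAtMost_1_3 by auto
  next
    case (Periodic a b L)
    have R: "(y, z) \<in> region g" if "a \<le> y" "y \<le> b" for y z using that Periodic by simp
    have w_per: "w i (y, z + L) = w i (y, z)" if "i \<in> {1..3}" for i y z
      using boundary_w[OF that] Periodic by simp
    have "sdx 3 (w i) (y, L) = sdx 3 (w i) (y, 0)" if "i \<in> {1..3}" "a < y" "y < b" for i y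
      using periodic_derivative_eq[of "\<lambda>z. w i (y, z)" L] w_per[OF that(1)]
        smooth_on_has_real_derivative_snd[OF smooth_w[OF that(1)] R] that by simp
    moreover have "\<pi> (y, L) = \<pi> (y, 0)" for y
      using periodic_\<pi> Periodic by (metis add_0 periodic_field.simps(2))
    ultimately show ?thesis
      using Periodic m w_per[of _ _ 0] unfolding flux_def sum_atLeastAtMost_1_3 by auto
  qed
qed

lemma integral_flux_deriv_eq_0:
  "(LINT x:dom g|lborel. flux_deriv q 2 x) = 0" "(LINT x:dom g|lborel. flux_deriv q 3 x) = 0"
proof -
  show "(LINT x:dom g|lborel. flux_deriv q 2 x) = 0"
    by (rule divergence_theorem_geometry_fst[OF valid flux_has_derivative_fst
          continuous_flux_deriv flux_free(1)]) auto
  show "(LINT x:dom g|lborel. flux_deriv q 3 x) = 0"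
    by (rule divergence_theorem_geometry_snd[OF valid flux_has_derivative_snd
          continuous_flux_deriv flux_free(2)]) auto
qed

lemma energy_density_eq:
  assumes "x \<in> dom g" "q 2 = q 3"
  shows "(\<Sum>i\<in>{1..3}. q i * w i x * wt i x) = flux_deriv q 2 x + flux_deriv q 3 x
    + (\<Sum>i\<in>{1..3}. q i / Rey * (C * (w i x)\<^sup>2 - ((sdx 2 (w i) x)\<^sup>2 + (sdx 3 (w i) x)\<^sup>2))
        - dissipation_density Rey F U C q w f i x)"
  using energy_density_identity[where wt="\<lambda>i. wt i x" and a="\<lambda>i j. sdx j (w i) x"
      and c="\<lambda>i j. sdx j (sdx j (w i)) x" and sU="\<lambda>i j. sdx j (U i) x" and P="\<lambda>j. sdx j \<pi> x"
      and p="\<pi> x" and w="\<lambda>i. w i x" and U="\<lambda>j. U j x" and f="\<lambda>i. f i x" and Re=Rey and C=C,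
      OF momentum[OF _ assms(1), unfolded slap_def] _ _ divergence_free[OF assms(1)] assms(2)]
  unfolding flux_deriv_def dissipation_density_def by (simp add: sdx_def)

lemma integrable_dissipation_density:
  "i \<in> {1..3} \<Longrightarrow> set_integrable lborel (dom g) (dissipation_density Rey F U C q w f i)"
  unfolding dissipation_density_def[abs_def]
  by (intro set_integrable_dom[OF valid] continuous_intros continuous_fields continuous_f; simp)

text \<open>The energy inequality: by the divergence theorem the flux terms integrate to zero, and the
  Poincare inequality bounds the viscous dissipation of each component from below.\<close>

lemma energy_inequality:
  assumes Re: "0 < Rey" and q: "\<And>i. i \<in> {1..3} \<Longrightarrow> 0 \<le> q i" and q23: "q 2 = q 3"
    and poincare: "poincare_const g C"
  shows "(LINT x:dom g|lborel. (\<Sum>i\<in>{1..3}. q i * w i x * wt i x))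
           \<le> - (\<Sum>i\<in>{1..3}. LINT x:dom g|lborel. dissipation_density Rey F U C q w f i x)"
proof -
  let ?D = "dissipation_density Rey F U C q w f"
  let ?E = "\<lambda>i x. (w i x)\<^sup>2" and ?G = "\<lambda>i x. (sdx 2 (w i) x)\<^sup>2 + (sdx 3 (w i) x)\<^sup>2"
  let ?P = "\<lambda>i x. q i / Rey * (C * ?E i x - ?G i x)"
  have int_E: "set_integrable lborel (dom g) (?E i)" and int_G: "set_integrable lborel (dom g) (?G i)"
    if "i \<in> {1..3}" for i
    by (intro set_integrable_dom[OF valid] continuous_intros continuous_fields that)+
  have int_P: "set_integrable lborel (dom g) (?P i)" if "i \<in> {1..3}" for i
    by (intro set_integrable_dom[OF valid] continuous_intros continuous_fields that)
  note int_D = integrable_dissipation_density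
  have int_flux: "set_integrable lborel (dom g) (flux_deriv q k)" if "k \<in> {1..3}" for k
    by (rule set_integrable_dom[OF valid continuous_flux_deriv[OF that]])
  have P_nonpos: "(LINT x:dom g|lborel. ?P i x) \<le> 0" if i: "i \<in> {1..3}" for i
  proof -
    have "C * (LINT x:dom g|lborel. ?E i x) \<le> (LINT x:dom g|lborel. ?G i x)"
      using poincare smooth_w[OF i] boundary_w[OF i] unfolding poincare_const_def by blast
    hence "(LINT x:dom g|lborel. C * ?E i x - ?G i x) \<le> 0"
      using set_integral_diff(2)[OF set_integrable_mult_right[OF int_E[OF i]] int_G[OF i]] by simp
    moreover have "0 \<le> q i / Rey" using q[OF i] Re by simp
    ultimately have "q i / Rey * (LINT x:dom g|lborel. C * ?E i x - ?G i x) \<le> 0"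
      by (rule mult_nonneg_nonpos[rotated])
    thus ?thesis by (simp only: set_integral_mult_right)
  qed
  have "(LINT x:dom g|lborel. (\<Sum>i\<in>{1..3}. q i * w i x * wt i x))
        = (LINT x:dom g|lborel. flux_deriv q 2 x + flux_deriv q 3 x + (\<Sum>i\<in>{1..3}. ?P i x - ?D i x))"
    by (rule set_lebesgue_integral_cong) (use open_dom[OF valid] energy_density_eq q23 in auto)
  also have "\<dots> = (\<Sum>i\<in>{1..3}. (LINT x:dom g|lborel. ?P i x) - (LINT x:dom g|lborel. ?D i x))"
  proof -
    have int_PD: "set_integrable lborel (dom g) (\<lambda>x. ?P i x - ?D i x)" if "i \<in> {1..3}" for i
      using int_P[OF that] int_D[OF that] by (rule set_integral_diff(1))
    have "(LINT x:dom g|lborel. flux_deriv q 2 x + flux_deriv q 3 x + (\<Sum>i\<in>{1..3}. ?P i x - ?D i x))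
        = (LINT x:dom g|lborel. flux_deriv q 2 x) + (LINT x:dom g|lborel. flux_deriv q 3 x)
          + (\<Sum>i\<in>{1..3}. LINT x:dom g|lborel. ?P i x - ?D i x)"
    proof -
      have int_sum: "set_integrable lborel (dom g) (\<lambda>x. \<Sum>i\<in>{1..3}. ?P i x - ?D i x)"
        by (rule set_integrable_sum) (rule int_PD)
      have int_flux23: "set_integrable lborel (dom g) (flux_deriv q 2)"
          "set_integrable lborel (dom g) (flux_deriv q 3)" by (auto intro: int_flux)
      show ?thesis
        using set_integral_add(2)[OF set_integral_add(1)[OF int_flux23] int_sum]
          set_integral_add(2)[OF int_flux23] set_integral_sum[where f="\<lambda>i x. ?P i x - ?D i x" and I="{1..3}", OF _ int_PD]
        by simp
    qed
    also have "\<dots> = (\<Sum>i\<in>{1..3}. LINT x:dom g|lborel. ?P i x - ?D i x)"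
      by (simp add: integral_flux_deriv_eq_0)
    finally show ?thesis
      using set_integral_diff(2)[OF int_P int_D] by simp
  qed
  also have "\<dots> \<le> (\<Sum>i\<in>{1..3}. - (LINT x:dom g|lborel. ?D i x))"
    by (rule sum_mono) (use P_nonpos in auto)
  finally show ?thesis by (simp add: sum_negf)
qed

end

section \<open>Energy estimates along solutions\<close>

lemma solution_smooth:
  assumes "solution g Rey F U u p d"
  shows "i \<in> {1..3} \<Longrightarrow> smooth_on ({0..} \<times> region g) (\<lambda>(t, x). u i t x)"
    "i \<in> {1..3} \<Longrightarrow> smooth_on ({0..} \<times> region g) (\<lambda>(t, x). d i t x)"
    "smooth_on ({0..} \<times> region g) (\<lambda>(t, x). p t x)"
  using assms unfolding solution_def by auto

lemma solution_continuous:
  assumes g: "valid_geometry g" and sol: "solution g Rey F U u p d" and i: "i \<in> {1..3}"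
  shows "continuous_on ({0..} \<times> closure (dom g)) (\<lambda>(t, x). u i t x)"
    "continuous_on ({0..} \<times> closure (dom g)) (\<lambda>(t, x). dt (u i) t x)"
    "continuous_on ({0..} \<times> closure (dom g)) (\<lambda>(t, x). d i t x)"
proof -
  have sub: "{0..} \<times> closure (dom g) \<subseteq> {0..} \<times> region g"
    using closure_dom_subset_region[OF g] by auto
  note smooth = solution_smooth(1,2)[OF sol i]
  show "continuous_on ({0..} \<times> closure (dom g)) (\<lambda>(t, x). u i t x)"
    by (rule smooth_on_continuous[OF smooth_on_subset[OF smooth(1) sub]])
  show "continuous_on ({0..} \<times> closure (dom g)) (\<lambda>(t, x). dt (u i) t x)"
    by (rule smooth_on_continuous[OF smooth_on_subset[OF smooth_on_dt[OF smooth(1)] sub]])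
  show "continuous_on ({0..} \<times> closure (dom g)) (\<lambda>(t, x). d i t x)"
    by (rule smooth_on_continuous[OF smooth_on_subset[OF smooth(2) sub]])
qed

lemma solution_momentum_slice:
  assumes g: "valid_geometry g" and base: "base_flow g Rey F U G Pt"
    and sol: "solution g Rey F U u p d" and s: "0 \<le> s"
  shows "momentum_slice g Rey F U (\<lambda>i. u i s) (\<lambda>i. dt (u i) s) (\<lambda>i. d i s) (p s)"
proof
  have in_slab: "(s, x) \<in> {0..} \<times> region g" if "x \<in> region g" for x using s that by simp
  show "smooth_on (region g) (u i s)" if "i \<in> {1..3}" for i
    using smooth_on_section[OF solution_smooth(1)[OF sol that] in_slab] by simp
  show "smooth_on (region g) (p s)"
    using smooth_on_section[OF solution_smooth(3)[OF sol] in_slab] by simp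
  show "continuous_on (closure (dom g)) (d i s)" if "i \<in> {1..3}" for i
    using continuous_on_section[OF solution_continuous(3)[OF g sol that], of s] s by simp
qed (use g base sol s in \<open>auto simp: base_flow_def solution_def dx_def lap_def\<close>)

definition weighted_energy :: "geometry \<Rightarrow> (nat \<Rightarrow> real) \<Rightarrow> (nat \<Rightarrow> real \<times> real \<Rightarrow> real) \<Rightarrow> real" where
  "weighted_energy g q v = (LINT x:dom g|lborel. (\<Sum>i\<in>{1..3}. q i * (v i x)\<^sup>2))"

definition energy_rate ::
  "geometry \<Rightarrow> (nat \<Rightarrow> real) \<Rightarrow> (nat \<Rightarrow> real \<Rightarrow> real \<times> real \<Rightarrow> real) \<Rightarrow> real \<Rightarrow> real" where
  "energy_rate g q u t = (LINT x:dom g|lborel. (\<Sum>i\<in>{1..3}. 2 * q i * u i t x * dt (u i) t x))"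

lemma L2_sq_eq_weighted_energy: "L2_sq (dom g) v = weighted_energy g (\<lambda>_. 1) v"
  by (simp add: L2_sq_def weighted_energy_def)

lemma weighted_energy_eq_sum:
  assumes "valid_geometry g" "\<And>i. i \<in> {1..3} \<Longrightarrow> continuous_on (closure (dom g)) (v i)"
  shows "weighted_energy g q v = (\<Sum>i\<in>{1..3}. q i * (LINT x:dom g|lborel. (v i x)\<^sup>2))"
proof -
  have "set_integrable lborel (dom g) (\<lambda>x. q i * (v i x)\<^sup>2)" if "i \<in> {1..3}" for i
    by (intro set_integrable_dom assms continuous_intros that)
  thus ?thesis
    using set_integral_sum[where f="\<lambda>i x. q i * (v i x)\<^sup>2" and I="{1..3}"]
    by (simp add: weighted_energy_def)
qed

lemma weighted_energy_nonneg: "(\<And>i. i \<in> {1..3} \<Longrightarrow> 0 \<le> q i) \<Longrightarrow> 0 \<le> weighted_energy g q v"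
  unfolding weighted_energy_def by (auto intro!: set_integral_nonneg sum_nonneg)

lemma weighted_energy_mono:
  assumes "valid_geometry g" "\<And>i. i \<in> {1..3} \<Longrightarrow> continuous_on (closure (dom g)) (v i)"
    and "\<And>i. i \<in> {1..3} \<Longrightarrow> q i \<le> q' i"
  shows "weighted_energy g q v \<le> weighted_energy g q' v"
proof -
  have "(\<Sum>i\<in>{1..3}. q i * (LINT x:dom g|lborel. (v i x)\<^sup>2))
      \<le> (\<Sum>i\<in>{1..3}. q' i * (LINT x:dom g|lborel. (v i x)\<^sup>2))"
    by (intro sum_mono mult_right_mono assms(3) set_integral_nonneg) auto
  thus ?thesis by (simp only: weighted_energy_eq_sum[OF assms(1,2)])
qed

lemma weighted_energy_scale:
  "weighted_energy g (\<lambda>i. c * q i) v = c * weighted_energy g q v"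
proof -
  have "(\<lambda>x. \<Sum>i\<in>{1..3}. c * q i * (v i x)\<^sup>2) = (\<lambda>x. c * (\<Sum>i\<in>{1..3}. q i * (v i x)\<^sup>2))"
    by (simp add: sum_distrib_left mult.assoc)
  thus ?thesis by (simp add: weighted_energy_def)
qed

lemma energy_identity:
  assumes g: "valid_geometry g" and sol: "solution g Rey F U u p d" and t: "0 \<le> t"
  shows "weighted_energy g q (\<lambda>i. u i t) - weighted_energy g q (\<lambda>i. u i 0)
           = integral {0..t} (energy_rate g q u)"
    and "continuous_on {0..t} (energy_rate g q u)"
proof -
  have sub: "{0..t} \<times> closure (dom g) \<subseteq> {0..} \<times> closure (dom g)" by auto
  have cont_u: "continuous_on ({0..t} \<times> closure (dom g)) (\<lambda>p. u i (fst p) (snd p))"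
    and cont_dt: "continuous_on ({0..t} \<times> closure (dom g)) (\<lambda>p. dt (u i) (fst p) (snd p))"
    if "i \<in> {1..3}" for i
    using continuous_on_subset[OF solution_continuous(1)[OF g sol that] sub]
      continuous_on_subset[OF solution_continuous(2)[OF g sol that] sub]
    by (simp_all add: case_prod_beta)
  let ?E = "\<lambda>p. \<Sum>i\<in>{1..3}. q i * (u i (fst p) (snd p))\<^sup>2"
  let ?E' = "\<lambda>p. \<Sum>i\<in>{1..3}. 2 * q i * u i (fst p) (snd p) * dt (u i) (fst p) (snd p)"
  have cont: "continuous_on ({0..t} \<times> closure (dom g)) ?E"
    "continuous_on ({0..t} \<times> closure (dom g)) ?E'"
    by (intro continuous_intros cont_u cont_dt; simp)+
  have deriv: "((\<lambda>r. ?E (r, x)) has_real_derivative ?E' (s, x)) (at s)"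
    if "s \<in> {0..t}" "x \<in> closure (dom g)" for s x
  proof -
    have D: "((\<lambda>r. u i r x) has_real_derivative dt (u i) s x) (at s)" if "i \<in> {1..3}" for i
      by (rule smooth_on_has_real_derivative_time[OF solution_smooth(1)[OF sol that]])
         (use \<open>s \<in> {0..t}\<close> \<open>x \<in> closure (dom g)\<close> closure_dom_subset_region[OF g] in auto)
    have "(1::nat) \<in> {1..3}" "(2::nat) \<in> {1..3}" "(3::nat) \<in> {1..3}" by auto
    note D' = D[OF this(1)] D[OF this(2)] D[OF this(3)]
    show ?thesis unfolding sum_atLeastAtMost_1_3 fst_conv snd_conv
      by (rule derivative_eq_intros D' refl)+ (simp add: algebra_simps)
  qed
  show "weighted_energy g q (\<lambda>i. u i t) - weighted_energy g q (\<lambda>i. u i 0)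
           = integral {0..t} (energy_rate g q u)"
    using set_integral_FTC_parametric[OF open_dom[OF g] bounded_dom[OF g] t cont deriv]
    by (simp add: weighted_energy_def energy_rate_def[abs_def])
  show "continuous_on {0..t} (energy_rate g q u)"
    using continuous_on_parametric_set_integral[OF open_dom[OF g] bounded_dom[OF g] cont(2)]
    by (simp add: energy_rate_def[abs_def])
qed

text \<open>\<open>h\<close> collects the terms by which the integrand of a hypothesis of the theorem differs from
  the dissipation density, \<open>c\<close> any additional term.\<close>

lemma energy_rate_le:
  assumes g: "valid_geometry g" and Re: "0 < Rey" and base: "base_flow g Rey F U G Pt"
    and poincare: "poincare_const g C"
    and q_nonneg: "\<And>i. i \<in> {1..3} \<Longrightarrow> 0 \<le> q i" and q23: "q 2 = q 3"
    and sol: "solution g Rey F U u p d" and s: "0 \<le> s"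
    and h: "\<And>i. i \<in> {1..3} \<Longrightarrow> continuous_on (closure (dom g)) (h i)"
    and hyp: "0 \<le> (\<Sum>i\<in>{1..3}. LINT x:dom g|lborel.
                    dissipation_density Rey F U C q (\<lambda>i. u i s) (\<lambda>i. d i s) i x + h i x) + c"
  shows "energy_rate g q u s \<le> 2 * ((\<Sum>i\<in>{1..3}. LINT x:dom g|lborel. h i x) + c)"
proof -
  interpret momentum_slice g Rey F U "\<lambda>i. u i s" "\<lambda>i. dt (u i) s" "\<lambda>i. d i s" "p s"
    by (rule solution_momentum_slice[OF g base sol s])
  let ?D = "dissipation_density Rey F U C q (\<lambda>i. u i s) (\<lambda>i. d i s)"
  have "(LINT x:dom g|lborel. ?D i x + h i x) = (LINT x:dom g|lborel. ?D i x) + (LINT x:dom g|lborel. h i x)"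
    if "i \<in> {1..3}" for i
    using integrable_dissipation_density[OF that] set_integrable_dom[OF g h[OF that]] by simp
  hence "0 \<le> (\<Sum>i\<in>{1..3}. LINT x:dom g|lborel. ?D i x) + (\<Sum>i\<in>{1..3}. LINT x:dom g|lborel. h i x) + c"
    using hyp by (simp add: sum.distrib)
  moreover have "energy_rate g q u s = 2 * (LINT x:dom g|lborel. (\<Sum>i\<in>{1..3}. q i * u i s x * dt (u i) s x))"
  proof -
    have "(\<lambda>x. \<Sum>i\<in>{1..3}. 2 * q i * u i s x * dt (u i) s x)
        = (\<lambda>x. 2 * (\<Sum>i\<in>{1..3}. q i * u i s x * dt (u i) s x))"
      by (simp add: sum_distrib_left mult.assoc)
    thus ?thesis by (simp add: energy_rate_def)
  qed
  moreover have "(LINT x:dom g|lborel. (\<Sum>i\<in>{1..3}. q i * u i s x * dt (u i) s x))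
      \<le> - (\<Sum>i\<in>{1..3}. LINT x:dom g|lborel. ?D i x)"
    by (rule energy_inequality[OF Re _ q23 poincare]) (rule q_nonneg)
  ultimately show ?thesis
    by (smt (verit))
qed

lemma continuous_on_slab:
  assumes "continuous_on ({0..} \<times> K) (\<lambda>(t, x). f t x)"
  shows "continuous_on ({0..T} \<times> K) (\<lambda>p. f (fst p) (snd p))"
proof -
  have "{0..T} \<times> K \<subseteq> {0..} \<times> K" by auto
  from continuous_on_subset[OF assms this] show ?thesis by (simp add: case_prod_beta)
qed

lemma L2st_sq_vec_le:
  assumes \<Omega>: "open \<Omega>" "bounded \<Omega>"
    and cont: "\<And>i. i \<in> {1..3} \<Longrightarrow> continuous_on ({0..} \<times> closure \<Omega>) (\<lambda>(t, x). v i t x)"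
    and bound: "\<And>T. 0 \<le> T \<Longrightarrow> ennreal (integral {0..T} (\<lambda>s. L2_sq \<Omega> (\<lambda>i. v i s))) \<le> X"
  shows "L2st_sq_vec \<Omega> v \<le> X"
proof -
  let ?f = "\<lambda>p. \<Sum>i\<in>{1..3}. (v i (fst p) (snd p))\<^sup>2"
  have "continuous_on ({0..T} \<times> closure \<Omega>) (\<lambda>p. v i (fst p) (snd p))" if "i \<in> {1..3}" for i T
    by (rule continuous_on_slab[OF cont[OF that]])
  hence "continuous_on ({0..T} \<times> closure \<Omega>) ?f" for T by (intro continuous_intros)
  moreover have "0 \<le> ?f (t, x)" for t x by (auto intro: sum_nonneg)
  ultimately have "(\<integral>\<^sup>+ t\<in>{0..}. (\<integral>\<^sup>+ x\<in>\<Omega>. ennreal (?f (t, x)) \<partial>lborel) \<partial>lborel) \<le> X"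
    using bound by (intro nn_integral_half_line_le[OF \<Omega>]) (simp_all add: L2_sq_def)
  thus ?thesis by (simp add: L2st_sq_vec_def)
qed

lemma time_integral_le_L2st_sq:
  assumes \<Omega>: "open \<Omega>" "bounded \<Omega>" and T: "0 \<le> T"
    and cont: "continuous_on ({0..} \<times> closure \<Omega>) (\<lambda>(t, x). f t x)"
  shows "ennreal (integral {0..T} (\<lambda>s. LINT x:\<Omega>|lborel. (f s x)\<^sup>2)) \<le> L2st_sq \<Omega> f"
proof -
  have "continuous_on ({0..T} \<times> closure \<Omega>) (\<lambda>p. f (fst p) (snd p))"
    by (rule continuous_on_slab[OF cont])
  hence "continuous_on ({0..T} \<times> closure \<Omega>) (\<lambda>p. (f (fst p) (snd p))\<^sup>2)"
    by (rule continuous_on_power)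
  hence "ennreal (integral {0..T} (\<lambda>s. LINT x:\<Omega>|lborel. (f s x)\<^sup>2))
      = (\<integral>\<^sup>+ t\<in>{0..T}. (\<integral>\<^sup>+ x\<in>\<Omega>. ennreal ((f t x)\<^sup>2) \<partial>lborel) \<partial>lborel)"
    using nn_integral_time_slab[OF \<Omega> T, of "\<lambda>p. (f (fst p) (snd p))\<^sup>2"] by simp
  also have "\<dots> \<le> L2st_sq \<Omega> f"
    unfolding L2st_sq_def by (rule nn_integral_mono) (auto split: split_indicator)
  finally show ?thesis .
qed

lemma continuous_on_time_L2_sq:
  fixes f :: "real \<Rightarrow> real \<times> real \<Rightarrow> real"
  assumes \<Omega>: "open \<Omega>" "bounded \<Omega>" and cont: "continuous_on ({0..} \<times> closure \<Omega>) (\<lambda>(t, x). f t x)"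
  shows "continuous_on {0..T} (\<lambda>s. LINT x:\<Omega>|lborel. (f s x)\<^sup>2)"
proof -
  have "continuous_on ({0..T} \<times> closure \<Omega>) (\<lambda>p. f (fst p) (snd p))"
    by (rule continuous_on_slab[OF cont])
  hence "continuous_on ({0..T} \<times> closure \<Omega>) (\<lambda>p. (f (fst p) (snd p))\<^sup>2)"
    by (rule continuous_on_power)
  from continuous_on_parametric_set_integral[OF \<Omega> this] show ?thesis by simp
qed

lemma L2st_sq_vec_le_sum_L2st_sq:
  fixes f :: "nat \<Rightarrow> real \<Rightarrow> real \<times> real \<Rightarrow> real"
  assumes \<Omega>: "open \<Omega>" "bounded \<Omega>"
    and cont_v: "\<And>i. i \<in> {1..3} \<Longrightarrow> continuous_on ({0..} \<times> closure \<Omega>) (\<lambda>(t, x). v i t x)"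
    and cont_f: "\<And>i. i \<in> {1..3} \<Longrightarrow> continuous_on ({0..} \<times> closure \<Omega>) (\<lambda>(t, x). f i t x)"
    and c: "\<And>i. i \<in> {1..3} \<Longrightarrow> 0 \<le> c i"
    and bound: "\<And>T. 0 \<le> T \<Longrightarrow> integral {0..T} (\<lambda>s. L2_sq \<Omega> (\<lambda>i. v i s))
                  \<le> (\<Sum>i\<in>{1..3}. c i * integral {0..T} (\<lambda>s. LINT x:\<Omega>|lborel. (f i s x)\<^sup>2))"
  shows "L2st_sq_vec \<Omega> v \<le> (\<Sum>i\<in>{1..3}. ennreal (c i) * L2st_sq \<Omega> (f i))"
proof (rule L2st_sq_vec_le[OF \<Omega> cont_v])
  fix T :: real assume T: "0 \<le> T"
  let ?e = "\<lambda>i. integral {0..T} (\<lambda>s. LINT x:\<Omega>|lborel. (f i s x)\<^sup>2)"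
  have "0 \<le> ?e i" if "i \<in> {1..3}" for i
    using continuous_on_time_L2_sq[OF \<Omega> cont_f[OF that]]
    by (intro integral_nonneg integrable_continuous_real) (auto intro!: set_integral_nonneg)
  hence "ennreal (\<Sum>i\<in>{1..3}. c i * ?e i) = (\<Sum>i\<in>{1..3}. ennreal (c i) * ennreal (?e i))"
    using c by (subst sum_ennreal[symmetric]) (auto simp: ennreal_mult)
  also have "\<dots> \<le> (\<Sum>i\<in>{1..3}. ennreal (c i) * L2st_sq \<Omega> (f i))"
    by (intro sum_mono mult_left_mono time_integral_le_L2st_sq[OF \<Omega> T] cont_f) auto
  finally show "ennreal (integral {0..T} (\<lambda>s. L2_sq \<Omega> (\<lambda>i. v i s)))
      \<le> (\<Sum>i\<in>{1..3}. ennreal (c i) * L2st_sq \<Omega> (f i))"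
    using ennreal_leI[OF bound[OF T]] by (rule order_trans[rotated])
qed

lemma continuous_on_L2_sq_solution:
  assumes g: "valid_geometry g" and sol: "solution g Rey F U u p d"
  shows "continuous_on {0..T} (\<lambda>s. L2_sq (dom g) (\<lambda>i. u i s))"
proof -
  have "continuous_on ({0..T} \<times> closure (dom g)) (\<lambda>p. u i (fst p) (snd p))" if "i \<in> {1..3}" for i
    by (rule continuous_on_slab[OF solution_continuous(1)[OF g sol that]])
  hence "continuous_on ({0..T} \<times> closure (dom g)) (\<lambda>p. \<Sum>i\<in>{1..3}. (u i (fst p) (snd p))\<^sup>2)"
    by (intro continuous_intros)
  from continuous_on_parametric_set_integral[OF open_dom[OF g] bounded_dom[OF g] this]
  show ?thesis by (simp add: L2_sq_def)
qed

lemma dissipation_integral_bound: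
  fixes V W m r :: "real \<Rightarrow> real"
  assumes T: "0 \<le> T" and V: "V T - V 0 = integral {0..T} W" "0 \<le> V T"
    and cont: "continuous_on {0..T} W" "continuous_on {0..T} m" "continuous_on {0..T} r"
    and rate: "\<And>s. s \<in> {0..T} \<Longrightarrow> W s \<le> 2 * (r s - m s)"
  shows "2 * integral {0..T} m \<le> V 0 + 2 * integral {0..T} r"
proof -
  have int: "m integrable_on {0..T}" "r integrable_on {0..T}"
    using cont by (simp_all add: integrable_continuous_real)
  have "integral {0..T} W \<le> integral {0..T} (\<lambda>s. 2 * (r s - m s))"
  proof (rule integral_le)
    show "W integrable_on {0..T}" by (rule integrable_continuous_real[OF cont(1)])
    show "(\<lambda>s. 2 * (r s - m s)) integrable_on {0..T}"
      using int by (simp add: integrable_diff)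
  qed (rule rate)
  also have "\<dots> = 2 * (integral {0..T} r - integral {0..T} m)"
    using int by (simp add: integral_diff)
  finally show ?thesis using V unfolding right_diff_distrib by linarith
qed

text \<open>Gronwall: \<open>s \<mapsto> e\<^sup>a\<^sup>s (V s - b / a)\<close> is non-increasing.\<close>

lemma gronwall_affine:
  fixes V W :: "real \<Rightarrow> real"
  assumes t: "0 < t" and a: "0 < a" and b: "0 \<le> b"
    and V: "\<And>s. s \<in> {0..t} \<Longrightarrow> V s = V 0 + integral {0..s} W"
    and cont: "continuous_on {0..t} W"
    and rate: "\<And>s. 0 \<le> s \<Longrightarrow> s < t \<Longrightarrow> W s \<le> - a * V s + b"
  shows "V t \<le> exp (- a * t) * V 0 + b / a"
proof -
  define c where "c = V 0"
  have V_c: "V s = c + integral {0..s} W" if "s \<in> {0..t}" for s using V[OF that] c_def by simp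
  define Z where "Z s = exp (a * s) * (V s - b / a)" for s
  have int_cont: "continuous_on {0..t} (\<lambda>x. integral {0..x} W)"
    by (rule indefinite_integral_continuous_1[OF integrable_continuous_real[OF cont]])
  have V_cont: "continuous_on {0..t} V"
  proof -
    have "continuous_on {0..t} (\<lambda>x. c + integral {0..x} W)" by (intro continuous_intros int_cont)
    thus ?thesis by (rule continuous_on_eq) (use V_c in auto)
  qed
  have V_deriv: "(V has_real_derivative W s) (at s)" if s: "0 < s" "s < t" for s
  proof -
    have "((\<lambda>x. integral {0..x} W) has_real_derivative W s) (at s within {0..t})"
      by (rule integral_has_real_derivative[OF cont]) (use s in auto)
    moreover have "at s within {0..t} = at s"
      by (rule at_within_interior) (use s in auto)
    ultimately have d1: "((\<lambda>x. integral {0..x} W) has_real_derivative W s) (at s)" by simp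
    have d2: "((\<lambda>x. c + integral {0..x} W) has_real_derivative W s) (at s)"
      using DERIV_add[OF DERIV_const d1] by simp
    show ?thesis
      by (rule has_field_derivative_transform_within_open[OF d2, of "{0<..<t}"]) (use s V_c in auto)
  qed
  have "Z t \<le> Z 0"
  proof (rule DERIV_nonpos_imp_decreasing_open[where f=Z and a=0 and b=t])
    show "0 \<le> t" using t by simp
    show "continuous_on {0..t} Z" unfolding Z_def by (intro continuous_intros V_cont)
    fix s assume s: "0 < s" "s < t"
    have "(Z has_real_derivative exp (a * s) * a * (V s - b / a) + exp (a * s) * W s) (at s)"
      unfolding Z_def by (rule derivative_eq_intros V_deriv[OF s] refl)+ (simp add: algebra_simps)
    moreover have "exp (a * s) * a * (V s - b / a) + exp (a * s) * W s \<le> 0"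
    proof -
      have "exp (a * s) * a * (V s - b / a) + exp (a * s) * W s = exp (a * s) * (a * V s - b + W s)"
        using a by (simp add: field_simps)
      moreover have "a * V s - b + W s \<le> 0" using rate[of s] s by simp
      ultimately show ?thesis by (simp add: mult_nonneg_nonpos)
    qed
    ultimately show "\<exists>y. (Z has_real_derivative y) (at s) \<and> y \<le> 0" by blast
  qed
  hence "exp (a * t) * (V t - b / a) \<le> V 0 - b / a" by (simp add: Z_def)
  hence "V t - b / a \<le> exp (- a * t) * (V 0 - b / a)"
    by (simp add: exp_minus field_simps)
  moreover have "exp (- a * t) * (b / a) \<ge> 0" using a b by simp
  ultimately show ?thesis by (simp add: algebra_simps)
qed

lemma class_K_inf_scale: "0 < c \<Longrightarrow> class_K_inf (\<lambda>r. c * r)"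
  unfolding class_K_inf_def class_K_def
proof (intro conjI)
  assume c: "0 < c"
  show "\<not> bdd_above ((\<lambda>r. c * r) ` {0..})"
  proof
    assume "bdd_above ((\<lambda>r. c * r) ` {0..})"
    then obtain M where "\<And>r. r \<ge> 0 \<Longrightarrow> c * r \<le> M" by (auto simp: bdd_above_def)
    from this[of "(\<bar>M\<bar> + 1) / c"] c show False by simp
  qed
qed (auto intro!: continuous_intros simp: strict_mono_on_def)

lemma class_K_inf_sqrt_scale: "0 < k \<Longrightarrow> class_K_inf (\<lambda>r. sqrt (r / k))"
  unfolding class_K_inf_def class_K_def
proof (intro conjI)
  assume k: "0 < k"
  show "strict_mono_on {0..} (\<lambda>r. sqrt (r / k))"
    using k by (auto simp: strict_mono_on_def divide_strict_right_mono)
  show "\<not> bdd_above ((\<lambda>r. sqrt (r / k)) ` {0..})"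
  proof
    assume "bdd_above ((\<lambda>r. sqrt (r / k)) ` {0..})"
    then obtain M where "\<And>r. r \<ge> 0 \<Longrightarrow> sqrt (r / k) \<le> M" by (auto simp: bdd_above_def)
    from this[of "(\<bar>M\<bar> + 1)\<^sup>2 * k"] k show False by simp
  qed
qed (auto intro!: continuous_intros)

lemma solution_continuous_slice:
  assumes "valid_geometry g" "solution g Rey F U u p d" "i \<in> {1..3}" "0 \<le> s"
  shows "continuous_on (closure (dom g)) (u i s)" "continuous_on (closure (dom g)) (d i s)"
  using continuous_on_section[OF solution_continuous(1)[OF assms(1-3)], of s]
    continuous_on_section[OF solution_continuous(3)[OF assms(1-3)], of s] assms(4)
  by simp_all

lemma L2_sq_eq_sum:
  assumes "valid_geometry g" "\<And>i. i \<in> {1..3} \<Longrightarrow> continuous_on (closure (dom g)) (v i)"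
  shows "L2_sq (dom g) v = (\<Sum>i\<in>{1..3}. LINT x:dom g|lborel. (v i x)\<^sup>2)"
  using weighted_energy_eq_sum[OF assms] by (simp add: L2_sq_eq_weighted_energy)

lemma L2_sq_nonneg: "0 \<le> L2_sq \<Omega> v"
  unfolding L2_sq_def by (auto intro!: set_integral_nonneg sum_nonneg)

lemma L2_gain_unforced:
  assumes g: "valid_geometry g" and Re: "0 < Rey" and base: "base_flow g Rey F U G Pt"
    and poincare: "poincare_const g C" and q_pos: "\<forall>i\<in>{1..3}. 0 < q i" and q23: "q 2 = q 3"
    and sol: "solution g Rey F U u p d" and unforced: "\<forall>i\<in>{1..3}. \<forall>t\<ge>0. \<forall>x\<in>dom g. d i t x = 0"
    and hyp: "\<forall>t\<ge>0. 0 \<le> (\<Sum>i\<in>{1..3}. LINT x:dom g|lborel.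
            (q i * C / Rey - 1) * (u i t x)\<^sup>2
            + q i * (\<Sum>j\<in>{1..3}. U j x * u i t x * dx j (u i) t x)
            + q i * (\<Sum>j\<in>{1..3}. u j t x * u i t x * sdx j (U i) x)
            - q i * u i t x * (\<Sum>j\<in>{1..3}. F i j * u j t x))"
  shows "L2st_sq_vec (dom g) u \<le> ennreal (Max (q ` {1..3})) * ennreal (L2_sq (dom g) (\<lambda>i. u i 0))"
proof -
  define m where "m s = L2_sq (dom g) (\<lambda>i. u i s)" for s
  define qmax where "qmax = Max (q ` {1..3})"
  have q_le: "q i \<le> qmax" if "i \<in> {1..3}" for i unfolding qmax_def using that by (intro Max_ge) auto
  have qmax_pos: "0 < qmax" using q_le[of 1] q_pos by force
  have q_nonneg: "0 \<le> q i" if "i \<in> {1..3}" for i using q_pos[rule_format, OF that] by simp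
  note cont_u = solution_continuous_slice(1)[OF g sol]
  have rate: "energy_rate g q u s \<le> 2 * (0 - m s)" if s: "0 \<le> s" for s
  proof -
    have "(LINT x:dom g|lborel. (q i * C / Rey - 1) * (u i s x)\<^sup>2
            + q i * (\<Sum>j\<in>{1..3}. U j x * u i s x * dx j (u i) s x)
            + q i * (\<Sum>j\<in>{1..3}. u j s x * u i s x * sdx j (U i) x)
            - q i * u i s x * (\<Sum>j\<in>{1..3}. F i j * u j s x))
        = (LINT x:dom g|lborel. dissipation_density Rey F U C q (\<lambda>i. u i s) (\<lambda>i. d i s) i x
            + - (u i s x)\<^sup>2)" if "i \<in> {1..3}" for i
      by (rule set_lebesgue_integral_cong)
         (use open_dom[OF g] unforced that s in \<open>auto simp: dissipation_density_def dx_def algebra_simps\<close>)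
    hence "energy_rate g q u s \<le> 2 * ((\<Sum>i\<in>{1..3}. LINT x:dom g|lborel. - (u i s x)\<^sup>2) + 0)"
      using hyp s q_nonneg
      by (intro energy_rate_le[OF g Re base poincare _ q23 sol s]) (auto intro!: continuous_intros cont_u)
    moreover have "m s = (\<Sum>i\<in>{1..3}. LINT x:dom g|lborel. (u i s x)\<^sup>2)"
      unfolding m_def by (rule L2_sq_eq_sum[OF g cont_u[OF _ s]])
    moreover have "(LINT x:dom g|lborel. - (u i s x)\<^sup>2) = - (LINT x:dom g|lborel. (u i s x)\<^sup>2)" for i
      using set_integral_mult_right[where a="-1" and f="\<lambda>x. (u i s x)\<^sup>2"] by simp
    ultimately show ?thesis by (simp add: sum_negf)
  qed
  have "integral {0..T} m \<le> qmax * L2_sq (dom g) (\<lambda>i. u i 0)" if T: "0 \<le> T" for T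
  proof -
    have "2 * integral {0..T} m \<le> weighted_energy g q (\<lambda>i. u i 0) + 2 * integral {0..T} (\<lambda>_. 0)"
      using rate unfolding m_def
      by (intro dissipation_integral_bound[OF T energy_identity(1)[OF g sol T]
            weighted_energy_nonneg[of q, OF q_nonneg] energy_identity(2)[OF g sol T]
            continuous_on_L2_sq_solution[OF g sol] continuous_on_const]) auto
    also have "\<dots> \<le> weighted_energy g (\<lambda>i. qmax * 1) (\<lambda>i. u i 0)"
      using q_le by (auto intro!: weighted_energy_mono[OF g] cont_u)
    also have "\<dots> = qmax * L2_sq (dom g) (\<lambda>i. u i 0)"
      by (simp only: weighted_energy_scale L2_sq_eq_weighted_energy)
    finally show ?thesis
      using mult_nonneg_nonneg[OF less_imp_le[OF qmax_pos] L2_sq_nonneg[of "dom g" "\<lambda>i. u i 0"]]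
      by linarith
  qed
  hence "L2st_sq_vec (dom g) u \<le> ennreal (qmax * L2_sq (dom g) (\<lambda>i. u i 0))"
    by (intro L2st_sq_vec_le[OF open_dom[OF g] bounded_dom[OF g] solution_continuous(1)[OF g sol]]
        ennreal_leI) (simp_all add: m_def[abs_def])
  thus ?thesis
    using qmax_pos L2_sq_nonneg by (simp add: qmax_def ennreal_mult)
qed

lemma L2_gain_forcing:
  assumes g: "valid_geometry g" and Re: "0 < Rey" and base: "base_flow g Rey F U G Pt"
    and poincare: "poincare_const g C" and q_pos: "\<forall>i\<in>{1..3}. 0 < q i" and q23: "q 2 = q 3"
    and sol: "solution g Rey F U u p d" and at_rest: "\<forall>i\<in>{1..3}. \<forall>x\<in>dom g. u i 0 x = 0"
    and hyp: "\<forall>t\<ge>0. 0 \<le> (\<Sum>i\<in>{1..3}. LINT x:dom g|lborel.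
            (q i * C / Rey - 1) * (u i t x)\<^sup>2
            + q i * (\<Sum>j\<in>{1..3}. U j x * u i t x * dx j (u i) t x)
            + q i * (\<Sum>j\<in>{1..3}. u j t x * u i t x * sdx j (U i) x)
            - q i * u i t x * (\<Sum>j\<in>{1..3}. F i j * u j t x)
            - q i * u i t x * d i t x
            + (\<eta> i)\<^sup>2 * (d i t x)\<^sup>2)"
  shows "L2st_sq_vec (dom g) u \<le> (\<Sum>i\<in>{1..3}. ennreal ((\<eta> i)\<^sup>2) * L2st_sq (dom g) (d i))"
proof -
  define m where "m s = L2_sq (dom g) (\<lambda>i. u i s)" for s
  define e where "e i s = (LINT x:dom g|lborel. (d i s x)\<^sup>2)" for i s
  define r where "r s = (\<Sum>i\<in>{1..3}. (\<eta> i)\<^sup>2 * e i s)" for s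
  have q_nonneg: "0 \<le> q i" if "i \<in> {1..3}" for i using q_pos[rule_format, OF that] by simp
  note cont_u = solution_continuous_slice(1)[OF g sol] and cont_d = solution_continuous_slice(2)[OF g sol]
  have cont_e: "continuous_on {0..T} (e i)" if "i \<in> {1..3}" for i T
    unfolding e_def[abs_def]
    by (rule continuous_on_time_L2_sq[OF open_dom[OF g] bounded_dom[OF g] solution_continuous(3)[OF g sol that]])
  have rate: "energy_rate g q u s \<le> 2 * (r s - m s)" if s: "0 \<le> s" for s
  proof -
    let ?h = "\<lambda>i x. - (u i s x)\<^sup>2 + (\<eta> i)\<^sup>2 * (d i s x)\<^sup>2"
    have "(LINT x:dom g|lborel. (q i * C / Rey - 1) * (u i s x)\<^sup>2
            + q i * (\<Sum>j\<in>{1..3}. U j x * u i s x * dx j (u i) s x)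
            + q i * (\<Sum>j\<in>{1..3}. u j s x * u i s x * sdx j (U i) x)
            - q i * u i s x * (\<Sum>j\<in>{1..3}. F i j * u j s x)
            - q i * u i s x * d i s x + (\<eta> i)\<^sup>2 * (d i s x)\<^sup>2)
        = (LINT x:dom g|lborel. dissipation_density Rey F U C q (\<lambda>i. u i s) (\<lambda>i. d i s) i x + ?h i x)"
      for i
      by (rule set_lebesgue_integral_cong)
         (use open_dom[OF g] in \<open>auto simp: dissipation_density_def dx_def algebra_simps\<close>)
    hence "energy_rate g q u s \<le> 2 * ((\<Sum>i\<in>{1..3}. LINT x:dom g|lborel. ?h i x) + 0)"
      using hyp s q_nonneg
      by (intro energy_rate_le[OF g Re base poincare _ q23 sol s])
         (auto intro!: continuous_intros cont_u cont_d)
    moreover have "(LINT x:dom g|lborel. ?h i x) = (\<eta> i)\<^sup>2 * e i s - (LINT x:dom g|lborel. (u i s x)\<^sup>2)"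
      if "i \<in> {1..3}" for i
      using set_integral_diff(2)[of lborel "dom g" "\<lambda>x. (\<eta> i)\<^sup>2 * (d i s x)\<^sup>2" "\<lambda>x. (u i s x)\<^sup>2"]
        set_integrable_dom[OF g] cont_u[OF that s] cont_d[OF that s]
      by (simp add: e_def continuous_intros)
    moreover have "m s = (\<Sum>i\<in>{1..3}. LINT x:dom g|lborel. (u i s x)\<^sup>2)"
      unfolding m_def by (rule L2_sq_eq_sum[OF g cont_u[OF _ s]])
    ultimately show ?thesis by (simp add: r_def sum_subtractf)
  qed
  have bound: "integral {0..T} m \<le> (\<Sum>i\<in>{1..3}. (\<eta> i)\<^sup>2 * integral {0..T} (e i))" if T: "0 \<le> T" for T
  proof -
    have "weighted_energy g q (\<lambda>i. u i 0) = 0"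
      unfolding weighted_energy_def
      by (subst set_lebesgue_integral_cong[where g="\<lambda>_. 0"]) (use at_rest open_dom[OF g] in auto)
    moreover have "2 * integral {0..T} m \<le> weighted_energy g q (\<lambda>i. u i 0) + 2 * integral {0..T} r"
    proof (rule dissipation_integral_bound[OF T energy_identity(1)[OF g sol T]
          weighted_energy_nonneg[of q, OF q_nonneg] energy_identity(2)[OF g sol T]])
      show "continuous_on {0..T} m"
        using continuous_on_L2_sq_solution[OF g sol] by (simp add: m_def[abs_def])
      show "continuous_on {0..T} r"
        unfolding r_def[abs_def] by (intro continuous_intros cont_e) auto
    qed (use rate in auto)
    moreover have "integral {0..T} r = (\<Sum>i\<in>{1..3}. (\<eta> i)\<^sup>2 * integral {0..T} (e i))"
      unfolding r_def using cont_e
      by (subst integral_sum) (auto intro!: integrable_continuous_real continuous_intros)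
    ultimately show ?thesis by linarith
  qed
  show ?thesis
    using bound unfolding m_def[abs_def] e_def[abs_def]
    by (intro L2st_sq_vec_le_sum_L2st_sq[OF open_dom[OF g] bounded_dom[OF g]] solution_continuous[OF g sol])
       auto
qed

lemma vnorm_nonneg: "0 \<le> vnorm v"
  by (simp add: vnorm_def sum_nonneg)

lemma continuous_on_forcing_supply:
  fixes \<sigma> :: "real \<Rightarrow> real"
  assumes g: "valid_geometry g" and sol: "solution g Rey F U u p d" and \<sigma>: "continuous_on {0..} \<sigma>"
  shows "continuous_on {0..t} (\<lambda>\<tau>. LINT x:dom g|lborel. \<sigma> (vnorm (\<lambda>i. d i \<tau> x)))"
proof -
  have "continuous_on ({0..t} \<times> closure (dom g)) (\<lambda>p. d i (fst p) (snd p))" if "i \<in> {1..3}" for i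
    by (rule continuous_on_slab[OF solution_continuous(3)[OF g sol that]])
  hence "continuous_on ({0..t} \<times> closure (dom g)) (\<lambda>p. vnorm (\<lambda>i. d i (fst p) (snd p)))"
    unfolding vnorm_def by (intro continuous_intros) auto
  hence "continuous_on ({0..t} \<times> closure (dom g)) (\<lambda>p. \<sigma> (vnorm (\<lambda>i. d i (fst p) (snd p))))"
    by (rule continuous_on_compose2[OF \<sigma>]) (auto simp: vnorm_nonneg)
  from continuous_on_parametric_set_integral[OF open_dom[OF g] bounded_dom[OF g] this]
  show ?thesis by simp
qed

lemma le_Sup_image_atLeastLessThan:
  fixes S :: "real \<Rightarrow> real"
  assumes "continuous_on {0..t} S" "0 \<le> s" "s < t"
  shows "S s \<le> Sup (S ` {0..<t})"
proof -
  have "bdd_above (S ` {0..t})"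
    by (intro bounded_imp_bdd_above compact_imp_bounded compact_continuous_image assms(1) compact_Icc)
  hence "bdd_above (S ` {0..<t})" by (rule bdd_above_mono) auto
  thus ?thesis by (rule cSup_upper[rotated]) (use assms in auto)
qed

lemma sqrt_le_of_decay_bound:
  fixes X A \<Sigma> qmin qmax \<psi> t :: real
  assumes qmin: "0 < qmin" "qmin \<le> qmax" and "0 < \<psi>" "0 \<le> \<Sigma>" "0 \<le> A"
    and bound: "qmin * X \<le> exp (- (2 * \<psi>) * t) * (qmax * A) + \<Sigma> / \<psi>"
  shows "sqrt X \<le> sqrt (qmax / qmin) * (exp (- \<psi> * t) * sqrt A) + sqrt (\<Sigma> / (\<psi> * qmin))"
proof -
  have "X \<le> (exp (- (2 * \<psi>) * t) * (qmax * A) + \<Sigma> / \<psi>) / qmin"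
    using bound qmin by (simp add: pos_le_divide_eq mult.commute)
  also have "\<dots> = exp (- (2 * \<psi>) * t) * (qmax / qmin) * A + \<Sigma> / (\<psi> * qmin)"
    by (simp add: add_divide_distrib)
  finally have "sqrt X \<le> sqrt (exp (- (2 * \<psi>) * t) * (qmax / qmin) * A + \<Sigma> / (\<psi> * qmin))"
    by (rule real_sqrt_le_mono)
  also have "\<dots> \<le> sqrt (exp (- (2 * \<psi>) * t) * (qmax / qmin) * A) + sqrt (\<Sigma> / (\<psi> * qmin))"
    by (rule sqrt_add_le_add_sqrt) (use assms in auto)
  also have "sqrt (exp (- (2 * \<psi>) * t) * (qmax / qmin) * A) = sqrt (qmax / qmin) * (exp (- \<psi> * t) * sqrt A)"
  proof -
    have "exp (- (2 * \<psi>) * t) = (exp (- \<psi> * t))\<^sup>2"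
      by (simp add: power2_eq_square flip: exp_add)
    hence "sqrt (exp (- (2 * \<psi>) * t)) = exp (- \<psi> * t)" by simp
    thus ?thesis by (simp only: real_sqrt_mult) (simp add: ac_simps)
  qed
  finally show ?thesis .
qed

lemma L2_norm_ISS_estimate:
  assumes g: "valid_geometry g" and Re: "0 < Rey" and base: "base_flow g Rey F U G Pt"
    and poincare: "poincare_const g C" and q_pos: "\<forall>i\<in>{1..3}. 0 < q i" and q23: "q 2 = q 3"
    and \<psi>_pos: "\<forall>i\<in>{1..3}. 0 < \<psi> i" and \<sigma>: "class_K \<sigma>"
    and sol: "solution g Rey F U u p d"
    and hyp: "\<forall>t\<ge>0. 0 \<le> (\<Sum>i\<in>{1..3}. LINT x:dom g|lborel.
            (q i * C / Rey - \<psi> i * q i) * (u i t x)\<^sup>2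
            + q i * (\<Sum>j\<in>{1..3}. U j x * u i t x * dx j (u i) t x)
            + q i * (\<Sum>j\<in>{1..3}. u j t x * u i t x * sdx j (U i) x)
            - q i * u i t x * (\<Sum>j\<in>{1..3}. F i j * u j t x)
            - q i * u i t x * d i t x)
          + (LINT x:dom g|lborel. \<sigma> (vnorm (\<lambda>i. d i t x)))"
    and t: "0 < t"
  defines "qmin \<equiv> Min (q ` {1..3})" and "qmax \<equiv> Max (q ` {1..3})" and "\<psi>min \<equiv> Min (\<psi> ` {1..3})"
  shows "L2_norm (dom g) (\<lambda>i. u i t)
     \<le> sqrt (qmax / qmin) * (exp (- \<psi>min * t) * L2_norm (dom g) (\<lambda>i. u i 0))
       + sqrt (Sup ((\<lambda>\<tau>. LINT x:dom g|lborel. \<sigma> (vnorm (\<lambda>i. d i \<tau> x))) ` {0..<t}) / (\<psi>min * qmin))"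
proof -
  define V where "V s = weighted_energy g q (\<lambda>i. u i s)" for s
  define S where "S \<tau> = (LINT x:dom g|lborel. \<sigma> (vnorm (\<lambda>i. d i \<tau> x)))" for \<tau>
  define \<Sigma> where "\<Sigma> = Sup (S ` {0..<t})"
  have q_nonneg: "0 \<le> q i" if "i \<in> {1..3}" for i using q_pos[rule_format, OF that] by simp
  have qmin: "qmin \<le> q i" "0 < qmin" if "i \<in> {1..3}" for i
    using that q_pos unfolding qmin_def by (auto intro: Min_le simp: Min_gr_iff)
  have qmax: "q i \<le> qmax" if "i \<in> {1..3}" for i unfolding qmax_def using that by (intro Max_ge) auto
  have \<psi>min: "\<psi>min \<le> \<psi> i" if "i \<in> {1..3}" for i unfolding \<psi>min_def using that by (intro Min_le) auto
  have \<psi>min_pos: "0 < \<psi>min" unfolding \<psi>min_def using \<psi>_pos by (subst Min_gr_iff) auto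
  have qmin_pos: "0 < qmin" using qmin(2)[of 1] by simp
  note cont_u = solution_continuous_slice(1)[OF g sol] and cont_d = solution_continuous_slice(2)[OF g sol]
  have rate: "energy_rate g q u s \<le> 2 * (S s - \<psi>min * V s)" if s: "0 \<le> s" for s
  proof -
    let ?h = "\<lambda>i x. - (\<psi> i * q i) * (u i s x)\<^sup>2"
    have "(LINT x:dom g|lborel. (q i * C / Rey - \<psi> i * q i) * (u i s x)\<^sup>2
            + q i * (\<Sum>j\<in>{1..3}. U j x * u i s x * dx j (u i) s x)
            + q i * (\<Sum>j\<in>{1..3}. u j s x * u i s x * sdx j (U i) x)
            - q i * u i s x * (\<Sum>j\<in>{1..3}. F i j * u j s x)
            - q i * u i s x * d i s x)
        = (LINT x:dom g|lborel. dissipation_density Rey F U C q (\<lambda>i. u i s) (\<lambda>i. d i s) i x + ?h i x)"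
      for i
      by (rule set_lebesgue_integral_cong)
         (use open_dom[OF g] in \<open>auto simp: dissipation_density_def dx_def algebra_simps\<close>)
    hence "energy_rate g q u s \<le> 2 * ((\<Sum>i\<in>{1..3}. LINT x:dom g|lborel. ?h i x) + S s)"
      using hyp s q_nonneg unfolding S_def
      by (intro energy_rate_le[OF g Re base poincare _ q23 sol s]) (auto intro!: continuous_intros cont_u)
    moreover have "(\<Sum>i\<in>{1..3}. LINT x:dom g|lborel. ?h i x) = - weighted_energy g (\<lambda>i. \<psi> i * q i) (\<lambda>i. u i s)"
    proof -
      have "(LINT x:dom g|lborel. ?h i x) = - (\<psi> i * q i) * (LINT x:dom g|lborel. (u i s x)\<^sup>2)" for i
        by (rule set_integral_mult_right)
      moreover have "weighted_energy g (\<lambda>i. \<psi> i * q i) (\<lambda>i. u i s)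
          = (\<Sum>i\<in>{1..3}. \<psi> i * q i * (LINT x:dom g|lborel. (u i s x)\<^sup>2))"
        using weighted_energy_eq_sum[OF g, of "\<lambda>i. u i s"] cont_u[OF _ s] by simp
      ultimately show ?thesis by (simp add: sum_negf)
    qed
    moreover have "weighted_energy g (\<lambda>i. \<psi>min * q i) (\<lambda>i. u i s) \<le> weighted_energy g (\<lambda>i. \<psi> i * q i) (\<lambda>i. u i s)"
      using \<psi>min q_nonneg by (intro weighted_energy_mono[OF g cont_u[OF _ s]] mult_right_mono)
    ultimately show ?thesis by (simp add: V_def weighted_energy_scale)
  qed
  have S_cont: "continuous_on {0..t} S"
    unfolding S_def[abs_def] using \<sigma> by (intro continuous_on_forcing_supply[OF g sol]) (simp add: class_K_def)
  have S_le: "S s \<le> \<Sigma>" if "0 \<le> s" "s < t" for s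
    unfolding \<Sigma>_def by (rule le_Sup_image_atLeastLessThan[OF S_cont that])
  have "0 \<le> \<sigma> r" if "0 \<le> r" for r using \<sigma> that by (simp add: class_K_def)
  hence "0 \<le> S 0" unfolding S_def by (intro set_integral_nonneg) (simp add: vnorm_nonneg)
  hence \<Sigma>_nonneg: "0 \<le> \<Sigma>" using S_le[of 0] t by linarith
  have gronwall: "V t \<le> exp (- (2 * \<psi>min) * t) * V 0 + 2 * \<Sigma> / (2 * \<psi>min)"
  proof (rule gronwall_affine[OF t])
    show "V s = V 0 + integral {0..s} (energy_rate g q u)" if "s \<in> {0..t}" for s
      using energy_identity(1)[OF g sol, of s q] that by (simp add: V_def)
    show "continuous_on {0..t} (energy_rate g q u)" using energy_identity(2)[OF g sol] t by simp
    show "energy_rate g q u s \<le> - (2 * \<psi>min) * V s + 2 * \<Sigma>" if "0 \<le> s" "s < t" for s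
      using rate[of s] S_le[of s] that by (simp add: algebra_simps)
  qed (use \<psi>min_pos \<Sigma>_nonneg in auto)
  have lower: "qmin * L2_sq (dom g) (\<lambda>i. u i t) \<le> V t"
  proof -
    have "weighted_energy g (\<lambda>_. qmin * 1) (\<lambda>i. u i t) \<le> V t"
      unfolding V_def by (rule weighted_energy_mono[OF g]) (use cont_u qmin t in auto)
    thus ?thesis by (simp only: weighted_energy_scale L2_sq_eq_weighted_energy)
  qed
  have upper: "V 0 \<le> qmax * L2_sq (dom g) (\<lambda>i. u i 0)"
  proof -
    have "V 0 \<le> weighted_energy g (\<lambda>_. qmax * 1) (\<lambda>i. u i 0)"
      unfolding V_def by (rule weighted_energy_mono[OF g]) (use cont_u qmax in auto)
    thus ?thesis by (simp only: weighted_energy_scale L2_sq_eq_weighted_energy)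
  qed
  have "exp (- (2 * \<psi>min) * t) * V 0 \<le> exp (- (2 * \<psi>min) * t) * (qmax * L2_sq (dom g) (\<lambda>i. u i 0))"
    by (rule mult_left_mono[OF upper]) simp
  moreover have "2 * \<Sigma> / (2 * \<psi>min) = \<Sigma> / \<psi>min" by simp
  ultimately have "qmin * L2_sq (dom g) (\<lambda>i. u i t)
      \<le> exp (- (2 * \<psi>min) * t) * (qmax * L2_sq (dom g) (\<lambda>i. u i 0)) + \<Sigma> / \<psi>min"
    using gronwall lower by linarith
  from sqrt_le_of_decay_bound[OF qmin_pos _ \<psi>min_pos \<Sigma>_nonneg L2_sq_nonneg this]
  show ?thesis using qmax[of 1] qmin(1)[of 1] by (simp add: L2_norm_def S_def \<Sigma>_def)
qed

lemma input_to_state_stability: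
  assumes g: "valid_geometry g" and Re: "0 < Rey" and base: "base_flow g Rey F U G Pt"
    and poincare: "poincare_const g C" and q_pos: "\<forall>i\<in>{1..3}. 0 < q i" and q23: "q 2 = q 3"
    and \<psi>_pos: "\<forall>i\<in>{1..3}. 0 < \<psi> i" and \<sigma>: "class_K \<sigma>"
    and hyp: "\<forall>u p d. solution g Rey F U u p d \<longrightarrow>
        (\<forall>t\<ge>0. 0 \<le> (\<Sum>i\<in>{1..3}. LINT x:dom g|lborel.
            (q i * C / Rey - \<psi> i * q i) * (u i t x)\<^sup>2
            + q i * (\<Sum>j\<in>{1..3}. U j x * u i t x * dx j (u i) t x)
            + q i * (\<Sum>j\<in>{1..3}. u j t x * u i t x * sdx j (U i) x)
            - q i * u i t x * (\<Sum>j\<in>{1..3}. F i j * u j t x)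
            - q i * u i t x * d i t x)
          + (LINT x:dom g|lborel. \<sigma> (vnorm (\<lambda>i. d i t x))))"
  shows "\<exists>\<psi>0 > 0. \<exists>\<beta> \<beta>' \<kappa>. class_K_inf \<beta> \<and> class_K_inf \<beta>' \<and> class_K_inf \<kappa> \<and>
           (\<forall>u p d. solution g Rey F U u p d \<longrightarrow>
              (\<forall>t>0. L2_norm (dom g) (\<lambda>i. u i t)
                 \<le> \<beta> (exp (- \<psi>0 * t) * \<kappa> (L2_norm (dom g) (\<lambda>i. u i 0)))
                   + \<beta>' (Sup ((\<lambda>\<tau>. LINT x:dom g|lborel. \<sigma> (vnorm (\<lambda>i. d i \<tau> x))) ` {0..<t}))))"
proof -
  define qmin qmax \<psi>min where "qmin = Min (q ` {1..3})" and "qmax = Max (q ` {1..3})"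
    and "\<psi>min = Min (\<psi> ` {1..3})"
  define \<beta> \<beta>' \<kappa> :: "real \<Rightarrow> real"
    where "\<beta> r = sqrt (qmax / qmin) * r" and "\<beta>' r = sqrt (r / (\<psi>min * qmin))" and "\<kappa> r = r" for r
  have "q 1 \<le> qmax" unfolding qmax_def by (rule Max_ge) auto
  hence "0 < qmax" using q_pos[rule_format, of 1] by simp
  moreover have "0 < qmin" "0 < \<psi>min" using q_pos \<psi>_pos by (auto simp: qmin_def \<psi>min_def)
  ultimately have "class_K_inf \<beta>" "class_K_inf \<beta>'" "class_K_inf \<kappa>"
    using class_K_inf_scale[of 1]
    by (auto simp: \<beta>_def[abs_def] \<beta>'_def[abs_def] \<kappa>_def[abs_def]
             intro!: class_K_inf_scale class_K_inf_sqrt_scale)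
  moreover have "L2_norm (dom g) (\<lambda>i. u i t)
      \<le> \<beta> (exp (- \<psi>min * t) * \<kappa> (L2_norm (dom g) (\<lambda>i. u i 0)))
        + \<beta>' (Sup ((\<lambda>\<tau>. LINT x:dom g|lborel. \<sigma> (vnorm (\<lambda>i. d i \<tau> x))) ` {0..<t}))"
    if "solution g Rey F U u p d" "0 < t" for u p d t
    using L2_norm_ISS_estimate[OF g Re base poincare q_pos q23 \<psi>_pos \<sigma> that(1) _ that(2)] hyp that(1)
    unfolding \<beta>_def \<beta>'_def \<kappa>_def qmin_def qmax_def \<psi>min_def by blast
  ultimately show ?thesis using \<open>0 < \<psi>min\<close> by blast
qed

theorem corollaryB1:
  fixes g :: geometry and Rey :: real and F :: "nat \<Rightarrow> nat \<Rightarrow> real"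
    and U :: "nat \<Rightarrow> real \<times> real \<Rightarrow> real" and G :: real and Pt :: "real \<times> real \<Rightarrow> real"
    and C :: real and q \<psi> \<eta> :: "nat \<Rightarrow> real" and \<sigma> :: "real \<Rightarrow> real"
  assumes geom: "valid_geometry g"
    and Re_pos: "0 < Rey"
    and base: "base_flow g Rey F U G Pt"
    and C_pos: "0 < C"
    and poincare: "poincare_const g C"
    and q_pos: "\<forall>i\<in>{1..3}. 0 < q i"
    and q23: "q 2 = q 3"
    and psi_pos: "\<forall>i\<in>{1..3}. 0 < \<psi> i"
    and eta_pos: "\<forall>i\<in>{1..3}. 0 < \<eta> i"
    and sigma_K: "class_K \<sigma>"
  shows
   "((\<forall>u p d. solution g Rey F U u p d \<and> (\<forall>i\<in>{1..3}. \<forall>t\<ge>0. \<forall>x\<in>dom g. d i t x = 0) \<longrightarrow>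
        (\<forall>t\<ge>0. 0 \<le> (\<Sum>i\<in>{1..3}. LINT x:dom g|lborel.
            (q i * C / Rey - 1) * (u i t x)\<^sup>2
            + q i * (\<Sum>j\<in>{1..3}. U j x * u i t x * dx j (u i) t x)
            + q i * (\<Sum>j\<in>{1..3}. u j t x * u i t x * sdx j (U i) x)
            - q i * u i t x * (\<Sum>j\<in>{1..3}. F i j * u j t x))))
     \<longrightarrow> (\<forall>u p d. solution g Rey F U u p d \<and> (\<forall>i\<in>{1..3}. \<forall>t\<ge>0. \<forall>x\<in>dom g. d i t x = 0) \<longrightarrow>
           L2st_sq_vec (dom g) u \<le> ennreal (Max (q ` {1..3})) * ennreal (L2_sq (dom g) (\<lambda>i. u i 0))))
  \<and>
   ((\<forall>u p d. solution g Rey F U u p d \<longrightarrow>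
        (\<forall>t\<ge>0. 0 \<le> (\<Sum>i\<in>{1..3}. LINT x:dom g|lborel.
            (q i * C / Rey - 1) * (u i t x)\<^sup>2
            + q i * (\<Sum>j\<in>{1..3}. U j x * u i t x * dx j (u i) t x)
            + q i * (\<Sum>j\<in>{1..3}. u j t x * u i t x * sdx j (U i) x)
            - q i * u i t x * (\<Sum>j\<in>{1..3}. F i j * u j t x)
            - q i * u i t x * d i t x
            + (\<eta> i)\<^sup>2 * (d i t x)\<^sup>2)))
     \<longrightarrow> (\<forall>u p d. solution g Rey F U u p d \<and> (\<forall>i\<in>{1..3}. \<forall>x\<in>dom g. u i 0 x = 0) \<longrightarrow>
           L2st_sq_vec (dom g) u \<le> (\<Sum>i\<in>{1..3}. ennreal ((\<eta> i)\<^sup>2) * L2st_sq (dom g) (d i))))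
  \<and>
   ((\<forall>u p d. solution g Rey F U u p d \<longrightarrow>
        (\<forall>t\<ge>0. 0 \<le> (\<Sum>i\<in>{1..3}. LINT x:dom g|lborel.
            (q i * C / Rey - \<psi> i * q i) * (u i t x)\<^sup>2
            + q i * (\<Sum>j\<in>{1..3}. U j x * u i t x * dx j (u i) t x)
            + q i * (\<Sum>j\<in>{1..3}. u j t x * u i t x * sdx j (U i) x)
            - q i * u i t x * (\<Sum>j\<in>{1..3}. F i j * u j t x)
            - q i * u i t x * d i t x)
          + (LINT x:dom g|lborel. \<sigma> (vnorm (\<lambda>i. d i t x)))))
     \<longrightarrow> (\<exists>\<psi>0 > 0. \<exists>\<beta> \<beta>' \<kappa>. class_K_inf \<beta> \<and> class_K_inf \<beta>' \<and> class_K_inf \<kappa> \<and>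
           (\<forall>u p d. solution g Rey F U u p d \<longrightarrow>
              (\<forall>t>0. L2_norm (dom g) (\<lambda>i. u i t)
                 \<le> \<beta> (exp (- \<psi>0 * t) * \<kappa> (L2_norm (dom g) (\<lambda>i. u i 0)))
                   + \<beta>' (Sup ((\<lambda>\<tau>. LINT x:dom g|lborel. \<sigma> (vnorm (\<lambda>i. d i \<tau> x))) ` {0..<t}))))))"
  apply (intro conjI impI allI; (elim conjE)?)
  subgoal by (rule L2_gain_unforced[OF geom Re_pos base poincare q_pos q23]) blast+
  subgoal by (rule L2_gain_forcing[OF geom Re_pos base poincare q_pos q23]) blast+
  subgoal by (rule input_to_state_stability[OF geom Re_pos base poincare q_pos q23 psi_pos sigma_K])
  done

end
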